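(* A smooth cubic surface over $\mathbb{Q}$ that does not contain three pairwise disjoint lines defined over $\mathbb{Q}$ cannot contain exactly six lines defined over $\mathbb{Q}$.
   Context: A line on the surface is defined over $\mathbb{Q}$ if it is cut out by linear forms with rational coefficients and is contained in the surface. *)

theory Defs
  imports Complex_Main
begin

text \<open>Points of affine 4-space over the complex numbers (an algebraically closed
field containing the rationals) are modelled as functions nat => complex that
vanish outside the indices 0..3; projective points are the nonzero ones.
A cubic form over Q is given by rational coefficients c i j k (i,j,k < 4):
F(x) = sum_{i,j,k<4} c i j k * x_i x_j x_k.  Every cubic form arises this way.\<close>

definition pt4 :: "(nat \<Rightarrow> complex) \<Rightarrow> bool" where
  "pt4 x \<longleftrightarrow> (\<forall>i\<ge>4. x i = 0)"

definition zero4 :: "nat \<Rightarrow> complex" where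
  "zero4 = (\<lambda>_. 0)"

definition cubic_eval :: "(nat \<Rightarrow> nat \<Rightarrow> nat \<Rightarrow> rat) \<Rightarrow> (nat \<Rightarrow> complex) \<Rightarrow> complex" where
  "cubic_eval c x = (\<Sum>i<4. \<Sum>j<4. \<Sum>k<4. of_rat (c i j k) * x i * x j * x k)"

definition cubic_deriv :: "(nat \<Rightarrow> nat \<Rightarrow> nat \<Rightarrow> rat) \<Rightarrow> nat \<Rightarrow> (nat \<Rightarrow> complex) \<Rightarrow> complex" where
  "cubic_deriv c m x = (\<Sum>i<4. \<Sum>j<4. \<Sum>k<4. of_rat (c i j k) *
      ((if i = m then 1 else 0) * x j * x k + x i * (if j = m then 1 else 0) * x k
       + x i * x j * (if k = m then 1 else 0)))"

text \<open>Smooth: no singular point on the projective surface over the algebraic closure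
(here taken to be C).  This also forces the form to be nonzero.\<close>
definition smooth_cubic :: "(nat \<Rightarrow> nat \<Rightarrow> nat \<Rightarrow> rat) \<Rightarrow> bool" where
  "smooth_cubic c \<longleftrightarrow> (\<forall>x. pt4 x \<and> x \<noteq> zero4 \<longrightarrow>
      \<not> (cubic_eval c x = 0 \<and> (\<forall>m<4. cubic_deriv c m x = 0)))"

definition lin_indep2 :: "(nat \<Rightarrow> rat) \<Rightarrow> (nat \<Rightarrow> rat) \<Rightarrow> bool" where
  "lin_indep2 a b \<longleftrightarrow> (\<forall>s t. (\<forall>i<4. s * a i + t * b i = 0) \<longrightarrow> s = 0 \<and> t = 0)"

text \<open>The (cone over the) line cut out by two rational linear forms.\<close>
definition line_of :: "(nat \<Rightarrow> rat) \<Rightarrow> (nat \<Rightarrow> rat) \<Rightarrow> (nat \<Rightarrow> complex) set" where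
  "line_of a b = {x. pt4 x \<and> (\<Sum>i<4. of_rat (a i) * x i) = 0 \<and> (\<Sum>i<4. of_rat (b i) * x i) = 0}"

definition rat_line :: "(nat \<Rightarrow> complex) set \<Rightarrow> bool" where
  "rat_line L \<longleftrightarrow> (\<exists>a b. lin_indep2 a b \<and> L = line_of a b)"

definition rat_lines_on :: "(nat \<Rightarrow> nat \<Rightarrow> nat \<Rightarrow> rat) \<Rightarrow> (nat \<Rightarrow> complex) set set" where
  "rat_lines_on c = {L. rat_line L \<and> (\<forall>x\<in>L. cubic_eval c x = 0)}"

text \<open>Projective lines are disjoint iff the cones meet only in the origin.\<close>
definition lines_disjoint :: "(nat \<Rightarrow> complex) set \<Rightarrow> (nat \<Rightarrow> complex) set \<Rightarrow> bool" where
  "lines_disjoint L M \<longleftrightarrow> L \<inter> M = {zero4}"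

end

theory Submission
  imports Defs "HOL-Computational_Algebra.Polynomial"
begin

text \<open>If two rational lines L and M on the surface meet, the plane they span cuts the surface
  in L, M and a residual line N, which is again rational; smoothness prevents N from being L
  or M.  Every line meets this plane, hence meets L, M or N, and N is the only other line
  meeting both L and M (a line through the common point leaving the plane would make that
  point singular).  So each meeting pair of rational lines lies in a unique triangle
  that every rational line meets.  For a vertex t of a triangle, the lines outside the
  triangle meeting t are paired off by x \<mapsto> (the third line through t and x), and each
  outside line meets exactly one vertex.  Hence the number of rational lines is odd as soon
  as two of them meet, and two of any three meet when no three are pairwise disjoint.\<close>

section \<open>Vectors in four coordinates\<close>

definition of_rat_vec :: "(nat \<Rightarrow> rat) \<Rightarrow> nat \<Rightarrow> complex" where
  "of_rat_vec u = (\<lambda>n. of_rat (u n))"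

definition span2 :: "(nat \<Rightarrow> complex) \<Rightarrow> (nat \<Rightarrow> complex) \<Rightarrow> (nat \<Rightarrow> complex) set" where
  "span2 a b = {x. \<exists>s t. x = (\<lambda>n. s * a n + t * b n)}"

definition indep2 :: "(nat \<Rightarrow> complex) \<Rightarrow> (nat \<Rightarrow> complex) \<Rightarrow> bool" where
  "indep2 a b \<longleftrightarrow> (\<forall>s t. (\<forall>n. s * a n + t * b n = 0) \<longrightarrow> s = 0 \<and> t = 0)"

definition span3 :: "(nat \<Rightarrow> complex) \<Rightarrow> (nat \<Rightarrow> complex) \<Rightarrow> (nat \<Rightarrow> complex) \<Rightarrow> (nat \<Rightarrow> complex) set" where
  "span3 p u w = {x. \<exists>a b c. x = (\<lambda>n. a * p n + b * u n + c * w n)}"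

definition indep3 :: "(nat \<Rightarrow> complex) \<Rightarrow> (nat \<Rightarrow> complex) \<Rightarrow> (nat \<Rightarrow> complex) \<Rightarrow> bool" where
  "indep3 p u w \<longleftrightarrow> (\<forall>a b c. (\<forall>n. a * p n + b * u n + c * w n = 0) \<longrightarrow> a = 0 \<and> b = 0 \<and> c = 0)"

definition spans4 :: "(nat \<Rightarrow> complex) \<Rightarrow> (nat \<Rightarrow> complex) \<Rightarrow> (nat \<Rightarrow> complex) \<Rightarrow> (nat \<Rightarrow> complex) \<Rightarrow> bool" where
  "spans4 p u w e \<longleftrightarrow> (\<forall>y. pt4 y \<longrightarrow> (\<exists>a b c d. \<forall>n. y n = a * p n + b * u n + c * w n + d * e n))"

definition unit_vec :: "nat \<Rightarrow> nat \<Rightarrow> complex" where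
  "unit_vec m = (\<lambda>n. if n = m then 1 else 0)"

lemma pt4_of_rat_vec_iff: "pt4 (of_rat_vec u) \<longleftrightarrow> (\<forall>i\<ge>4. u i = 0)"
  unfolding pt4_def of_rat_vec_def by simp

lemma of_rat_vec_lincomb:
  "of_rat_vec (\<lambda>i. s * x i + t * y i) = (\<lambda>n. of_rat s * of_rat_vec x n + of_rat t * of_rat_vec y n)"
  unfolding of_rat_vec_def by (simp add: of_rat_add of_rat_mult)

lemma pt4_lincomb: "pt4 a \<Longrightarrow> pt4 b \<Longrightarrow> pt4 (\<lambda>n. s * a n + t * b n)"
  unfolding pt4_def by simp

lemma indep2D: "indep2 a b \<Longrightarrow> (\<And>n. s * a n + t * b n = 0) \<Longrightarrow> s = 0 \<and> t = 0"
  unfolding indep2_def by blast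

lemma indep3D: "indep3 p u w \<Longrightarrow> (\<And>n. a * p n + b * u n + c * w n = 0) \<Longrightarrow> a = 0 \<and> b = 0 \<and> c = 0"
  unfolding indep3_def by blast

lemma span2_mem: "(\<lambda>n. s * a n + t * b n) \<in> span2 a b"
  unfolding span2_def by blast

lemma span2_mem_left: "a \<in> span2 a b" and span2_mem_right: "b \<in> span2 a b"
  using span2_mem[of 1 a 0 b] span2_mem[of 0 a 1 b] by simp_all

lemma span2_lincomb:
  assumes "x \<in> span2 a b" "y \<in> span2 a b"
  shows "(\<lambda>n. s * x n + t * y n) \<in> span2 a b"
proof -
  obtain s1 t1 where x: "x = (\<lambda>n. s1 * a n + t1 * b n)" using assms(1) unfolding span2_def by blast
  obtain s2 t2 where y: "y = (\<lambda>n. s2 * a n + t2 * b n)" using assms(2) unfolding span2_def by blast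
  have "(\<lambda>n. s * x n + t * y n) = (\<lambda>n. (s * s1 + t * s2) * a n + (s * t1 + t * t2) * b n)"
    unfolding x y by (simp add: algebra_simps)
  then show ?thesis by (simp add: span2_mem)
qed

lemma span2_subset: "x \<in> span2 a b \<Longrightarrow> y \<in> span2 a b \<Longrightarrow> span2 x y \<subseteq> span2 a b"
  unfolding span2_def[of x y] using span2_lincomb by blast

lemma span2_eq_if_indep2:
  assumes ab: "indep2 a b" and x: "x \<in> span2 a b" and y: "y \<in> span2 a b" and xy: "indep2 x y"
  shows "span2 x y = span2 a b"
proof
  show "span2 x y \<subseteq> span2 a b" using span2_subset[OF x y] .
  obtain s1 t1 where xe: "x = (\<lambda>n. s1 * a n + t1 * b n)" using x unfolding span2_def by blast
  obtain s2 t2 where ye: "y = (\<lambda>n. s2 * a n + t2 * b n)" using y unfolding span2_def by blast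
  define d where "d = s1 * t2 - s2 * t1"
  have "d \<noteq> 0"
  proof
    assume "d = 0"
    then have h1: "\<And>n. t2 * x n + (- t1) * y n = 0" and h2: "\<And>n. s2 * x n + (- s1) * y n = 0"
      unfolding xe ye d_def by (simp_all add: algebra_simps)
    from h1 have "t2 = 0 \<and> - t1 = 0" by (rule indep2D[OF xy])
    moreover from h2 have "s2 = 0 \<and> - s1 = 0" by (rule indep2D[OF xy])
    ultimately have "\<And>n. 1 * x n + 0 * y n = 0" unfolding xe by simp
    then have "(1::complex) = 0 \<and> (0::complex) = 0" by (rule indep2D[OF xy])
    then show False by simp
  qed
  have "t2 * x n - t1 * y n = d * a n" "s1 * y n - s2 * x n = d * b n" for n
    unfolding xe ye d_def by (simp_all add: algebra_simps)
  then have "a = (\<lambda>n. (t2 / d) * x n + (- t1 / d) * y n)" "b = (\<lambda>n. (- s2 / d) * x n + (s1 / d) * y n)"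
    using \<open>d \<noteq> 0\<close> by (simp_all add: fun_eq_iff field_simps)
  then have "a \<in> span2 x y" "b \<in> span2 x y" using span2_mem by metis+
  then show "span2 a b \<subseteq> span2 x y" by (rule span2_subset)
qed

lemma indep2_with_generator:
  assumes ab: "indep2 a b" and x: "x \<in> span2 a b" and nz: "x \<noteq> zero4"
  shows "indep2 x a \<or> indep2 x b"
proof -
  obtain s t where xe: "x = (\<lambda>n. s * a n + t * b n)" using x unfolding span2_def by blast
  show ?thesis
  proof (cases "s = 0")
    case False
    have "indep2 x b" unfolding indep2_def
    proof (intro allI impI)
      fix k l assume "\<forall>n. k * x n + l * b n = 0"
      then have "\<And>n. (k * s) * a n + (k * t + l) * b n = 0" unfolding xe by (simp add: algebra_simps)
      then have "k * s = 0 \<and> k * t + l = 0" by (rule indep2D[OF ab])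
      then show "k = 0 \<and> l = 0" using False by auto
    qed
    then show ?thesis by simp
  next
    case True
    then have "t \<noteq> 0" using nz unfolding xe zero4_def by auto
    have "indep2 x a" unfolding indep2_def
    proof (intro allI impI)
      fix k l assume "\<forall>n. k * x n + l * a n = 0"
      then have "\<And>n. l * a n + (k * t) * b n = 0" using True unfolding xe by (simp add: algebra_simps)
      then have "l = 0 \<and> k * t = 0" by (rule indep2D[OF ab])
      then show "k = 0 \<and> l = 0" using \<open>t \<noteq> 0\<close> by auto
    qed
    then show ?thesis by simp
  qed
qed

lemma span2_through_point:
  assumes "indep2 a b" "x \<in> span2 a b" "x \<noteq> zero4"
  shows "\<exists>y\<in>{a, b}. indep2 x y \<and> span2 x y = span2 a b"
proof -
  have "indep2 x a \<Longrightarrow> span2 x a = span2 a b" "indep2 x b \<Longrightarrow> span2 x b = span2 a b"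
    using span2_eq_if_indep2[OF assms(1,2)] span2_mem_left span2_mem_right by blast+
  then show ?thesis using indep2_with_generator[OF assms] by blast
qed

lemma indep3_coords_unique:
  assumes "indep3 p u w" "(\<lambda>n. a * p n + b * u n + g * w n) = (\<lambda>n. a' * p n + b' * u n + g' * w n)"
  shows "a = a' \<and> b = b' \<and> g = g'"
proof -
  have "\<And>n. (a - a') * p n + (b - b') * u n + (g - g') * w n = 0"
    using fun_cong[OF assms(2)] by (simp add: algebra_simps)
  then have "a - a' = 0 \<and> b - b' = 0 \<and> g - g' = 0" by (rule indep3D[OF assms(1)])
  then show ?thesis by simp
qed

lemma indep3_if_notin_span2:
  assumes pu: "indep2 p u" and notin: "w \<notin> span2 p u"
  shows "indep3 p u w"
  unfolding indep3_def
proof (intro allI impI)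
  fix a b g assume h: "\<forall>n. a * p n + b * u n + g * w n = 0"
  show "a = 0 \<and> b = 0 \<and> g = 0"
  proof (cases "g = 0")
    case True
    then have "\<And>n. a * p n + b * u n = 0" using h by simp
    then have "a = 0 \<and> b = 0" by (rule indep2D[OF pu])
    then show ?thesis using True by simp
  next
    case False
    have "w = (\<lambda>n. (- a / g) * p n + (- b / g) * u n)"
    proof
      fix n
      have "g * w n = - (a * p n + b * u n)" unfolding eq_neg_iff_add_eq_0
        using h[rule_format, of n] by (simp add: algebra_simps)
      then show "w n = (- a / g) * p n + (- b / g) * u n"
        using False by (simp add: field_simps)
    qed
    then show ?thesis using notin span2_mem by metis
  qed
qed

lemma indep2_if_indep3:
  assumes "indep3 p u w"
  shows "indep2 p u" "indep2 p w"
  unfolding indep2_def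
proof (safe)
  fix s t
  assume "\<forall>n. s * p n + t * u n = 0"
  then have "\<And>n. s * p n + t * u n + 0 * w n = 0" by simp
  then show "s = 0" "t = 0" using indep3D[OF assms] by blast+
next
  fix s t
  assume "\<forall>n. s * p n + t * w n = 0"
  then have "\<And>n. s * p n + 0 * u n + t * w n = 0" by simp
  then show "s = 0" "t = 0" using indep3D[OF assms] by blast+
qed

lemma indep3_swap: "indep3 p u w \<Longrightarrow> indep3 p w u"
  unfolding indep3_def
proof (intro allI impI)
  fix a b g assume "\<forall>a b c. (\<forall>n. a * p n + b * u n + c * w n = 0) \<longrightarrow> a = 0 \<and> b = 0 \<and> c = 0"
    and "\<forall>n. a * p n + b * w n + g * u n = 0"
  then show "a = 0 \<and> b = 0 \<and> g = 0" by (metis add.commute add.left_commute)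
qed

section \<open>Rational lines\<close>

lemma line_of_lincomb:
  assumes "x \<in> line_of a b" "y \<in> line_of a b"
  shows "(\<lambda>n. s * x n + t * y n) \<in> line_of a b"
proof -
  have "(\<Sum>i<4. of_rat (f i) * (s * x i + t * y i)) =
      s * (\<Sum>i<4. of_rat (f i) * x i) + t * (\<Sum>i<4. of_rat (f i) * y i)" for f :: "nat \<Rightarrow> rat"
    by (simp add: algebra_simps sum.distrib sum_distrib_left)
  then show ?thesis using assms unfolding line_of_def by (simp add: pt4_lincomb)
qed

lemma linear_form_of_rat_vec:
  "(\<Sum>i<4. of_rat (a i) * of_rat_vec u i) = (of_rat (\<Sum>i<4. a i * u i) :: complex)"
  by (simp add: of_rat_vec_def of_rat_sum of_rat_mult)

lemma of_rat_vec_in_line_of_iff: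
  "pt4 (of_rat_vec u) \<Longrightarrow>
    of_rat_vec u \<in> line_of a b \<longleftrightarrow> (\<Sum>i<4. a i * u i) = 0 \<and> (\<Sum>i<4. b i * u i) = 0"
  unfolding line_of_def by (simp add: linear_form_of_rat_vec)

lemma lin_indep2D:
  assumes "lin_indep2 a b" "\<forall>i<4. s * a i + t * b i = 0"
  shows "s = 0 \<and> t = 0"
proof -
  have "\<forall>s t. (\<forall>i<4. s * a i + t * b i = 0) \<longrightarrow> s = 0 \<and> t = 0"
    using assms(1) unfolding lin_indep2_def .
  then show ?thesis using assms(2) by blast
qed

lemma lin_indep2_nonzero_minor:
  assumes "lin_indep2 a b"
  shows "\<exists>i<4. \<exists>j<4. a i * b j - a j * b i \<noteq> 0"
proof (rule ccontr)
  assume "\<not> ?thesis"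
  then have minor: "a i * b j - a j * b i = 0" if "i < 4" "j < 4" for i j
    using that by auto
  show False
  proof (cases "\<forall>i<4. a i = 0")
    case True
    then have "\<forall>i<4. 1 * a i + 0 * b i = 0" by simp
    from lin_indep2D[OF assms this] show False by simp
  next
    case False
    then obtain m where m: "m < 4" "a m \<noteq> 0" by auto
    have "\<forall>i<4. b m * a i + (- a m) * b i = 0"
      using minor[OF m(1)] by (simp add: algebra_simps)
    from lin_indep2D[OF assms this] show False using m(2) by simp
  qed
qed

lemma lessThan_4_eq:
  assumes "i < 4" "j < 4" "k < 4" "l < 4" "distinct [i, j, k, l::nat]"
  shows "{..<4} = {i, j, k, l}"
proof -
  have "{i, j, k, l} \<subseteq> {..<4}" "card {i, j, k, l} = 4" using assms by auto
  then show ?thesis by (intro card_subset_eq[symmetric]) auto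
qed

lemma sum_lessThan_4:
  assumes "i < 4" "j < 4" "k < 4" "l < 4" "distinct [i, j, k, l::nat]"
  shows "(\<Sum>n<4. g n) = g i + g j + g k + g l"
  using lessThan_4_eq[OF assms] assms(5) by (simp add: algebra_simps)

lemma two_by_two_unique:
  fixes y1 y2 :: "'a::field"
  assumes "A1 * y1 + A2 * y2 = 0" "B1 * y1 + B2 * y2 = 0" "A1 * B2 - A2 * B1 \<noteq> 0"
  shows "y1 = 0 \<and> y2 = 0"
proof -
  have "(A1 * B2 - A2 * B1) * y1 = 0" "(A1 * B2 - A2 * B1) * y2 = 0"
  proof -
    have "B2 * (A1 * y1 + A2 * y2) - A2 * (B1 * y1 + B2 * y2) = 0"
      "A1 * (B1 * y1 + B2 * y2) - B1 * (A1 * y1 + A2 * y2) = 0" using assms(1,2) by simp_all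
    then show "(A1 * B2 - A2 * B1) * y1 = 0" "(A1 * B2 - A2 * B1) * y2 = 0"
      by (simp_all add: algebra_simps)
  qed
  then show ?thesis using assms(3) by simp
qed

lemma line_of_eq_zero_if_coords_zero:
  assumes d: "a i * b j - a j * b i \<noteq> 0" and ij: "i < 4" "j < 4"
    and kl: "k < 4" "l < 4" "distinct [i, j, k, l]"
    and y: "y \<in> line_of a b" "y k = 0" "y l = 0"
  shows "y = zero4"
proof -
  have "of_rat (a i) * y i + of_rat (a j) * y j = 0" "of_rat (b i) * y i + of_rat (b j) * y j = 0"
    using y kl unfolding line_of_def sum_lessThan_4[OF ij kl] by auto
  moreover have "of_rat (a i) * of_rat (b j) - of_rat (a j) * of_rat (b i) \<noteq> (0::complex)"
    using d by (metis of_rat_diff of_rat_eq_0_iff of_rat_mult)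
  ultimately have "y i = 0" "y j = 0" using two_by_two_unique by blast+
  moreover have "pt4 y" using y(1) unfolding line_of_def by simp
  ultimately have "y n = 0" for n
    using y(2,3) lessThan_4_eq[OF ij kl] unfolding pt4_def
    by (cases "n < 4") auto
  then show ?thesis unfolding zero4_def by auto
qed

lemma line_of_eq_span2_of_coord_basis:
  assumes "u \<in> line_of a b" "v \<in> line_of a b" "u k = 1" "u l = 0" "v k = 0" "v l = 1"
    and zero: "\<And>y. y \<in> line_of a b \<Longrightarrow> y k = 0 \<Longrightarrow> y l = 0 \<Longrightarrow> y = zero4"
  shows "line_of a b = span2 u v" "indep2 u v"
proof -
  show "line_of a b = span2 u v"
  proof
    show "span2 u v \<subseteq> line_of a b"
    proof
      fix x assume "x \<in> span2 u v"
      then obtain s t where "x = (\<lambda>n. s * u n + t * v n)" unfolding span2_def by blast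
      then show "x \<in> line_of a b" using line_of_lincomb[OF assms(1,2)] by simp
    qed
  next
    show "line_of a b \<subseteq> span2 u v"
    proof
      fix x assume x: "x \<in> line_of a b"
      define z where "z = (\<lambda>n. x k * u n + x l * v n)"
      have "(\<lambda>n. 1 * x n + (- 1) * z n) \<in> line_of a b"
        unfolding z_def by (intro line_of_lincomb x assms(1,2))
      then have "(\<lambda>n. 1 * x n + (- 1) * z n) = zero4"
        by (rule zero) (simp_all add: z_def assms(3-6))
      then have "x = z" by (simp add: fun_eq_iff zero4_def)
      moreover have "z \<in> span2 u v" unfolding z_def by (rule span2_mem)
      ultimately show "x \<in> span2 u v" by simp
    qed
  qed
  show "indep2 u v"
    unfolding indep2_def
  proof (intro allI impI)
    fix s t assume "\<forall>n. s * u n + t * v n = 0"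
    then have "s * u k + t * v k = 0" "s * u l + t * v l = 0" by blast+
    then show "s = 0 \<and> t = 0" using assms(3-6) by simp
  qed
qed

text \<open>Solve the two equations for the coordinates i, j of a nonzero 2x2 minor, with the
  other two coordinates k, l free.\<close>
lemma line_of_eq_span2:
  assumes "lin_indep2 a b"
  shows "\<exists>u v. pt4 (of_rat_vec u) \<and> pt4 (of_rat_vec v) \<and> indep2 (of_rat_vec u) (of_rat_vec v)
    \<and> line_of a b = span2 (of_rat_vec u) (of_rat_vec v)"
proof -
  obtain i j where ij: "i < 4" "j < 4" and d: "a i * b j - a j * b i \<noteq> 0"
    using lin_indep2_nonzero_minor[OF assms] by auto
  then have "i \<noteq> j" by auto
  then have "\<exists>k l. k < 4 \<and> l < 4 \<and> distinct [i, j, k, l]"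
    using ij by simp presburger
  then obtain k l where kl: "k < 4" "l < 4" "distinct [i, j, k, l]" by blast
  note sum4 = sum_lessThan_4[OF ij kl]
  define d where "d = a i * b j - a j * b i"
  define sol where "sol m = (\<lambda>n. if n = m then 1 else if n = i then (a j * b m - a m * b j) / d
      else if n = j then (a m * b i - a i * b m) / d else 0)" for m
  let ?sol = "\<lambda>m. of_rat_vec (sol m)"
  have "d \<noteq> 0" using d unfolding d_def .
  have dist: "i \<noteq> k" "i \<noteq> l" "j \<noteq> k" "j \<noteq> l" "k \<noteq> l" "i \<noteq> j" using kl by auto
  have sol_pt4: "pt4 (?sol m)" if "m < 4" for m
    using that ij unfolding pt4_of_rat_vec_iff sol_def by auto
  have sol_in: "?sol m \<in> line_of a b" if "m = k \<or> m = l" for m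
  proof -
    have "(\<Sum>n<4. f n * sol m n) = (f i * (a j * b m - a m * b j) + f j * (a m * b i - a i * b m)
        + f m * d) / d" for f
      using that dist \<open>d \<noteq> 0\<close> unfolding sum4 sol_def
      by (auto simp: field_simps)
    then have "(\<Sum>n<4. a n * sol m n) = 0" "(\<Sum>n<4. b n * sol m n) = 0"
      unfolding d_def by (simp_all add: algebra_simps)
    moreover have "m < 4" using that kl by auto
    ultimately show ?thesis using of_rat_vec_in_line_of_iff[OF sol_pt4] by blast
  qed
  have sol_kl: "?sol k k = 1" "?sol k l = 0" "?sol l k = 0" "?sol l l = 1"
    unfolding sol_def of_rat_vec_def using dist by auto
  have "?sol k \<in> line_of a b" "?sol l \<in> line_of a b" by (rule sol_in, simp)+
  note basis = line_of_eq_span2_of_coord_basis[OF this sol_kl line_of_eq_zero_if_coords_zero[OF d ij kl]]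
  show ?thesis
    by (intro exI[of _ "sol k"] exI[of _ "sol l"] conjI sol_pt4 kl basis)
qed

lemma rat_line_eq_span2:
  assumes "rat_line L"
  shows "\<exists>u v. pt4 (of_rat_vec u) \<and> pt4 (of_rat_vec v) \<and> indep2 (of_rat_vec u) (of_rat_vec v)
    \<and> L = span2 (of_rat_vec u) (of_rat_vec v)"
proof -
  obtain a b where "lin_indep2 a b" "L = line_of a b" using assms unfolding rat_line_def by blast
  then show ?thesis using line_of_eq_span2 by simp
qed

lemma rat_line_lincomb: "rat_line L \<Longrightarrow> x \<in> L \<Longrightarrow> y \<in> L \<Longrightarrow> (\<lambda>n. s * x n + t * y n) \<in> L"
  unfolding rat_line_def using line_of_lincomb by blast

lemma cubic_eval_lincomb_on_rat_line:
  "L \<in> rat_lines_on c \<Longrightarrow> x \<in> L \<Longrightarrow> y \<in> L \<Longrightarrow> cubic_eval c (\<lambda>n. s * x n + t * y n) = 0"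
  unfolding rat_lines_on_def using rat_line_lincomb by blast

lemma lin_indep2_if_indep2:
  assumes "pt4 (of_rat_vec u)" "pt4 (of_rat_vec v)" "indep2 (of_rat_vec u) (of_rat_vec v)"
  shows "lin_indep2 u v"
  unfolding lin_indep2_def
proof (intro allI impI)
  fix s t assume h: "\<forall>i<4. s * u i + t * v i = 0"
  have "of_rat s * of_rat_vec u n + of_rat t * of_rat_vec v n = 0" for n
  proof (cases "n < 4")
    case True
    then have "of_rat (s * u n + t * v n) = (0::complex)" using h by simp
    then show ?thesis by (simp add: of_rat_vec_def of_rat_add of_rat_mult)
  next
    case False
    then show ?thesis using assms(1,2) unfolding pt4_def by simp
  qed
  then have "of_rat s = (0::complex) \<and> of_rat t = (0::complex)" by (rule indep2D[OF assms(3)])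
  then show "s = 0 \<and> t = 0" by simp
qed

text \<open>The line spanned by u and v is cut out by two independent forms spanning the annihilator
  of u and v, and the annihilator of those two forms is the line again.\<close>
lemma rat_line_span2:
  assumes u: "pt4 (of_rat_vec u)" and v: "pt4 (of_rat_vec v)" and uv: "indep2 (of_rat_vec u) (of_rat_vec v)"
  shows "rat_line (span2 (of_rat_vec u) (of_rat_vec v))"
proof -
  obtain a b where ab: "pt4 (of_rat_vec a)" "pt4 (of_rat_vec b)" "indep2 (of_rat_vec a) (of_rat_vec b)"
    "line_of u v = span2 (of_rat_vec a) (of_rat_vec b)"
    using line_of_eq_span2[OF lin_indep2_if_indep2[OF assms]] by blast
  have "of_rat_vec a \<in> line_of u v" "of_rat_vec b \<in> line_of u v"
    unfolding ab(4) by (rule span2_mem_left, rule span2_mem_right)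
  then have "(\<Sum>i<4. u i * a i) = 0" "(\<Sum>i<4. v i * a i) = 0"
    "(\<Sum>i<4. u i * b i) = 0" "(\<Sum>i<4. v i * b i) = 0"
    using of_rat_vec_in_line_of_iff ab(1,2) by blast+
  then have "of_rat_vec u \<in> line_of a b" "of_rat_vec v \<in> line_of a b"
    using of_rat_vec_in_line_of_iff u v by (simp_all add: mult.commute)
  moreover have lin: "lin_indep2 a b" by (rule lin_indep2_if_indep2[OF ab(1-3)])
  moreover obtain a' b' where "indep2 (of_rat_vec a') (of_rat_vec b')"
    "line_of a b = span2 (of_rat_vec a') (of_rat_vec b')"
    using line_of_eq_span2[OF lin] by blast
  ultimately have "span2 (of_rat_vec u) (of_rat_vec v) = line_of a b"
    using span2_eq_if_indep2[OF _ _ _ uv] by metis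
  then show ?thesis unfolding rat_line_def using lin by blast
qed

lemma nonzero_rat_solution_2x2:
  fixes a1 b1 a2 b2 :: rat and s t :: complex
  assumes "s \<noteq> 0 \<or> t \<noteq> 0" "s * of_rat a1 + t * of_rat b1 = 0" "s * of_rat a2 + t * of_rat b2 = 0"
  obtains s0 t0 where "s0 \<noteq> 0 \<or> t0 \<noteq> 0" "s0 * a1 + t0 * b1 = 0" "s0 * a2 + t0 * b2 = 0"
proof -
  have "of_rat (a1 * b2 - a2 * b1) * s = (0::complex)" "of_rat (a1 * b2 - a2 * b1) * t = (0::complex)"
  proof -
    have "of_rat b2 * (s * of_rat a1 + t * of_rat b1) - of_rat b1 * (s * of_rat a2 + t * of_rat b2) = (0::complex)"
      "of_rat a1 * (s * of_rat a2 + t * of_rat b2) - of_rat a2 * (s * of_rat a1 + t * of_rat b1) = (0::complex)"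
      using assms(2,3) by simp_all
    then show "of_rat (a1 * b2 - a2 * b1) * s = (0::complex)" "of_rat (a1 * b2 - a2 * b1) * t = (0::complex)"
      by (simp_all add: of_rat_diff of_rat_mult algebra_simps)
  qed
  then have det: "a1 * b2 - a2 * b1 = 0" using assms(1) by auto
  show ?thesis
  proof (cases "a1 \<noteq> 0 \<or> b1 \<noteq> 0")
    case True
    show ?thesis by (rule that[of b1 "- a1"]) (use True det in \<open>auto simp: algebra_simps\<close>)
  next
    case False
    show ?thesis
    proof (cases "a2 \<noteq> 0 \<or> b2 \<noteq> 0")
      case True
      show ?thesis by (rule that[of b2 "- a2"]) (use True det in \<open>auto simp: algebra_simps\<close>)
    next
      case False2: False
      show ?thesis by (rule that[of 1 0]) (use False False2 in auto)
    qed
  qed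
qed

text \<open>The meeting point solves a 2x2 linear system with rational coefficients, which then
  has a nonzero rational solution as well.\<close>
lemma rat_lines_meet_in_rat_point:
  assumes L: "rat_line L" and M: "rat_line M" and x: "x \<in> L" "x \<in> M" "x \<noteq> zero4"
  obtains q where "pt4 (of_rat_vec q)" "of_rat_vec q \<in> L" "of_rat_vec q \<in> M" "of_rat_vec q \<noteq> zero4"
proof -
  obtain a b where ab: "lin_indep2 a b" "L = line_of a b" using L unfolding rat_line_def by blast
  obtain u v where uv: "pt4 (of_rat_vec u)" "pt4 (of_rat_vec v)" "indep2 (of_rat_vec u) (of_rat_vec v)"
    "M = span2 (of_rat_vec u) (of_rat_vec v)"
    using rat_line_eq_span2[OF M] by blast
  obtain s t where xe: "x = (\<lambda>n. s * of_rat_vec u n + t * of_rat_vec v n)"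
    using x(2) uv(4) unfolding span2_def by blast
  have form: "(\<Sum>i<4. of_rat (f i) * x i) = s * of_rat (\<Sum>i<4. f i * u i) + t * of_rat (\<Sum>i<4. f i * v i)"
    for f
    unfolding xe linear_form_of_rat_vec[symmetric]
    by (simp add: algebra_simps sum.distrib sum_distrib_left)
  have "s \<noteq> 0 \<or> t \<noteq> 0" using x(3) unfolding xe zero4_def by auto
  moreover have "s * of_rat (\<Sum>i<4. a i * u i) + t * of_rat (\<Sum>i<4. a i * v i) = 0"
    "s * of_rat (\<Sum>i<4. b i * u i) + t * of_rat (\<Sum>i<4. b i * v i) = 0"
    using x(1) ab(2) form unfolding line_of_def by auto
  ultimately obtain s0 t0 where st0: "s0 \<noteq> 0 \<or> t0 \<noteq> 0"
    "s0 * (\<Sum>i<4. a i * u i) + t0 * (\<Sum>i<4. a i * v i) = 0"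
    "s0 * (\<Sum>i<4. b i * u i) + t0 * (\<Sum>i<4. b i * v i) = 0"
    by (rule nonzero_rat_solution_2x2)
  define q where "q = (\<lambda>i. s0 * u i + t0 * v i)"
  have qe: "of_rat_vec q = (\<lambda>n. of_rat s0 * of_rat_vec u n + of_rat t0 * of_rat_vec v n)"
    unfolding q_def by (rule of_rat_vec_lincomb)
  have q: "pt4 (of_rat_vec q)" unfolding qe by (rule pt4_lincomb[OF uv(1,2)])
  have "(\<Sum>i<4. f i * q i) = s0 * (\<Sum>i<4. f i * u i) + t0 * (\<Sum>i<4. f i * v i)" for f
    unfolding q_def by (simp add: algebra_simps sum.distrib sum_distrib_left)
  then have "of_rat_vec q \<in> L" using st0 ab(2) of_rat_vec_in_line_of_iff[OF q] by simp
  moreover have "of_rat_vec q \<in> M" unfolding uv(4) qe by (rule span2_mem)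
  moreover have "of_rat_vec q \<noteq> zero4"
  proof
    assume "of_rat_vec q = zero4"
    then have "\<And>n. of_rat s0 * of_rat_vec u n + of_rat t0 * of_rat_vec v n = 0"
      unfolding qe zero4_def by (simp add: fun_eq_iff)
    then have "of_rat s0 = (0::complex) \<and> of_rat t0 = (0::complex)" by (rule indep2D[OF uv(3)])
    then show False using st0(1) by simp
  qed
  ultimately show ?thesis using q that by blast
qed

definition lines_meet :: "(nat \<Rightarrow> complex) set \<Rightarrow> (nat \<Rightarrow> complex) set \<Rightarrow> bool" where
  "lines_meet A B \<longleftrightarrow> (\<exists>x\<in>A. x \<in> B \<and> x \<noteq> zero4)"

lemma lines_meet_sym: "lines_meet A B \<Longrightarrow> lines_meet B A"
  unfolding lines_meet_def by blast

lemma zero4_in_rat_line: "rat_line L \<Longrightarrow> zero4 \<in> L"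
  unfolding rat_line_def line_of_def zero4_def pt4_def by auto

lemma lines_disjoint_iff_not_meet:
  "rat_line L \<Longrightarrow> rat_line M \<Longrightarrow> lines_disjoint L M \<longleftrightarrow> \<not> lines_meet L M"
proof -
  assume "rat_line L" "rat_line M"
  then have "zero4 \<in> L \<inter> M" using zero4_in_rat_line by blast
  show ?thesis
    unfolding lines_disjoint_def
  proof
    assume "L \<inter> M = {zero4}"
    then show "\<not> lines_meet L M" unfolding lines_meet_def by blast
  next
    assume "\<not> lines_meet L M"
    then show "L \<inter> M = {zero4}" using \<open>zero4 \<in> L \<inter> M\<close> unfolding lines_meet_def by blast
  qed
qed

section \<open>Linear dependence in four coordinates\<close>

lemma dependency_lift:
  fixes w :: "'i \<Rightarrow> 'n \<Rightarrow> 'a::field"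
  assumes "finite I" "r \<notin> I" "\<exists>i\<in>I. c i \<noteq> 0" "\<forall>n. (\<Sum>i\<in>I. c i * (w i n - f i * w r n)) = 0"
  shows "\<exists>c'. (\<exists>i\<in>insert r I. c' i \<noteq> 0) \<and> (\<forall>n. (\<Sum>i\<in>insert r I. c' i * w i n) = 0)"
proof -
  define c' where "c' i = (if i = r then - (\<Sum>k\<in>I. c k * f k) else c i)" for i
  have "(\<Sum>i\<in>insert r I. c' i * w i n) = 0" for n
  proof -
    have "(\<Sum>i\<in>insert r I. c' i * w i n) = c' r * w r n + (\<Sum>i\<in>I. c i * w i n)"
      using assms(1,2) unfolding c'_def by (auto intro: sum.cong)
    also have "(\<Sum>i\<in>I. c i * (w i n - f i * w r n)) = (\<Sum>i\<in>I. c i * w i n) - (\<Sum>k\<in>I. c k * f k) * w r n"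
      by (simp add: right_diff_distrib sum_subtractf sum_distrib_right mult.assoc)
    then have "(\<Sum>i\<in>I. c i * w i n) = (\<Sum>i\<in>I. c i * (w i n - f i * w r n)) + (\<Sum>k\<in>I. c k * f k) * w r n"
      by (simp add: algebra_simps)
    finally show ?thesis using assms(4) unfolding c'_def by simp
  qed
  moreover have "\<exists>i\<in>insert r I. c' i \<noteq> 0" using assms(2,3) unfolding c'_def by auto
  ultimately show ?thesis by blast
qed

text \<open>Steinitz exchange, by induction on the generators: a vector with nonzero coefficient at
  the new generator is used to eliminate that generator from all the others.\<close>
lemma dependent_if_in_span_of_fewer:
  fixes w :: "'i \<Rightarrow> 'n \<Rightarrow> 'a::field" and v :: "'j \<Rightarrow> 'n \<Rightarrow> 'a"
  assumes "finite J" "finite I" "card J < card I"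
    and "\<forall>i\<in>I. \<exists>a. \<forall>n. w i n = (\<Sum>j\<in>J. a j * v j n)"
  shows "\<exists>c. (\<exists>i\<in>I. c i \<noteq> 0) \<and> (\<forall>n. (\<Sum>i\<in>I. c i * w i n) = 0)"
  using assms
proof (induction J arbitrary: I w rule: finite_induct)
  case empty
  then obtain i0 where i0: "i0 \<in> I" by (metis card.empty card_gt_0_iff ex_in_conv)
  have "w i n = 0" if "i \<in> I" for i n using empty.prems(3) that by auto
  then have "\<forall>n. (\<Sum>i\<in>I. (if i = i0 then 1 else 0) * w i n) = 0" by simp
  then show ?case using i0 by (intro exI[of _ "\<lambda>i. if i = i0 then 1 else 0"]) auto
next
  case (insert j0 J)
  obtain a where a: "\<And>i n. i \<in> I \<Longrightarrow> w i n = a i j0 * v j0 n + (\<Sum>j\<in>J. a i j * v j n)"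
    using insert.prems(3) insert.hyps by (simp add: Ball_def) metis
  have cardJ: "card (insert j0 J) = Suc (card J)" using insert.hyps by simp
  show ?case
  proof (cases "\<forall>i\<in>I. a i j0 = 0")
    case True
    then have "\<forall>i\<in>I. \<exists>b. \<forall>n. w i n = (\<Sum>j\<in>J. b j * v j n)" using a by auto
    then show ?thesis using insert.IH[of I w] insert.prems cardJ by simp
  next
    case False
    then obtain r where r: "r \<in> I" "a r j0 \<noteq> 0" by blast
    define f where "f i = a i j0 / a r j0" for i
    have "\<forall>i\<in>I - {r}. \<exists>b. \<forall>n. w i n - f i * w r n = (\<Sum>j\<in>J. b j * v j n)"
    proof
      fix i assume "i \<in> I - {r}"
      then have "w i n - f i * w r n = (\<Sum>j\<in>J. (a i j - f i * a r j) * v j n)" for n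
      proof -
        have "f i * a r j0 = a i j0" unfolding f_def using r(2) by simp
        then have "w i n - f i * w r n = (\<Sum>j\<in>J. a i j * v j n) - f i * (\<Sum>j\<in>J. a r j * v j n)"
          using a[of i n] a[OF r(1), of n] \<open>i \<in> I - {r}\<close> by (simp add: algebra_simps)
        also have "\<dots> = (\<Sum>j\<in>J. (a i j - f i * a r j) * v j n)"
          by (simp add: sum_distrib_left sum_subtractf algebra_simps)
        finally show ?thesis .
      qed
      then show "\<exists>b. \<forall>n. w i n - f i * w r n = (\<Sum>j\<in>J. b j * v j n)"
        by (intro exI[of _ "\<lambda>j. a i j - f i * a r j"]) simp
    qed
    moreover have "finite (I - {r})" "card J < card (I - {r})"
      using insert.prems(1,2) cardJ r(1) by auto
    ultimately obtain c where "\<exists>i\<in>I - {r}. c i \<noteq> 0" "\<forall>n. (\<Sum>i\<in>I - {r}. c i * (w i n - f i * w r n)) = 0"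
      using insert.IH[of "I - {r}" "\<lambda>i n. w i n - f i * w r n"] by blast
    then show ?thesis
      using dependency_lift[of "I - {r}" r c w f] insert.prems(1) r(1) by (simp add: insert_absorb)
  qed
qed

lemma pt4_eq_sum_unit_vec:
  assumes "pt4 y"
  shows "y n = (\<Sum>j<4. y j * unit_vec j n)"
proof -
  have "y j * unit_vec j n = (if n = j then y j else 0)" for j unfolding unit_vec_def by simp
  then show ?thesis using assms unfolding pt4_def by (simp add: sum.delta)
qed

lemma pt4_five_dependent:
  assumes "pt4 a" "pt4 b" "pt4 c" "pt4 d" "pt4 e"
  obtains k0 k1 k2 k3 k4 where "k0 \<noteq> 0 \<or> k1 \<noteq> 0 \<or> k2 \<noteq> 0 \<or> k3 \<noteq> 0 \<or> k4 \<noteq> 0"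
    "\<forall>n. k0 * a n + k1 * b n + k2 * c n + k3 * d n + k4 * e n = 0"
proof -
  define W where "W i = [a, b, c, d, e] ! i" for i
  have "\<forall>i\<in>{..<5}. \<exists>f. \<forall>n. W i n = (\<Sum>j<4. f j * unit_vec j n)"
  proof
    fix i assume "i \<in> {..<5::nat}"
    then have "pt4 (W i)" unfolding W_def using assms by (auto simp: less_Suc_eq numeral_eq_Suc)
    then show "\<exists>f. \<forall>n. W i n = (\<Sum>j<4. f j * unit_vec j n)" using pt4_eq_sum_unit_vec by blast
  qed
  then obtain k where k: "\<exists>i\<in>{..<5}. k i \<noteq> 0" "\<forall>n. (\<Sum>i<5. k i * W i n) = 0"
    using dependent_if_in_span_of_fewer[of "{..<4}" "{..<5}" W unit_vec] by auto
  have "k 0 \<noteq> 0 \<or> k 1 \<noteq> 0 \<or> k 2 \<noteq> 0 \<or> k 3 \<noteq> 0 \<or> k 4 \<noteq> 0"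
    using k(1) by (auto simp: less_Suc_eq numeral_eq_Suc)
  moreover have "\<forall>n. k 0 * a n + k 1 * b n + k 2 * c n + k 3 * d n + k 4 * e n = 0"
    using k(2) by (simp add: numeral_eq_Suc W_def add.assoc)
  ultimately show ?thesis using that by blast
qed

lemma exists_unit_vec_notin_span3: "\<exists>m<4. unit_vec m \<notin> span3 p u w"
proof (rule ccontr)
  assume "\<not> ?thesis"
  then have h: "\<forall>m<4. \<exists>a b c. unit_vec m = (\<lambda>n. a * p n + b * u n + c * w n)"
    unfolding span3_def by auto
  define V where "V j = [p, u, w] ! j" for j
  have "\<forall>i\<in>{..<4}. \<exists>f. \<forall>n. unit_vec i n = (\<Sum>j<3. f j * V j n)"
  proof
    fix i assume "i \<in> {..<4::nat}"
    then obtain a b c where "unit_vec i = (\<lambda>n. a * p n + b * u n + c * w n)" using h by auto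
    then have "\<forall>n. unit_vec i n = (\<Sum>j<3. [a, b, c] ! j * V j n)"
      by (simp add: numeral_eq_Suc V_def add.assoc)
    then show "\<exists>f. \<forall>n. unit_vec i n = (\<Sum>j<3. f j * V j n)" by blast
  qed
  then obtain k where k: "\<exists>i\<in>{..<4}. k i \<noteq> 0" "\<forall>n. (\<Sum>i<4. k i * unit_vec i n) = 0"
    using dependent_if_in_span_of_fewer[of "{..<3}" "{..<4}" unit_vec V] by auto
  from k(1) obtain i where i: "i < 4" "k i \<noteq> 0" by auto
  have "k j * unit_vec j i = (if i = j then k j else 0)" for j unfolding unit_vec_def by simp
  then have "(\<Sum>j<4. k j * unit_vec j i) = k i" using i(1) by (simp add: sum.delta)
  then show False using k(2) i by simp
qed

lemma indep4_if_notin_span3: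
  assumes "indep3 p u w" "z \<notin> span3 p u w" "\<And>n. k0 * p n + k1 * u n + k2 * w n + k3 * z n = 0"
  shows "k0 = 0 \<and> k1 = 0 \<and> k2 = 0 \<and> k3 = 0"
proof (cases "k3 = 0")
  case True
  then show ?thesis using assms(3) indep3D[OF assms(1), of k0 k1 k2] by simp
next
  case False
  have "z = (\<lambda>n. (- k0 / k3) * p n + (- k1 / k3) * u n + (- k2 / k3) * w n)"
  proof
    fix n
    have "k3 * z n = - (k0 * p n + k1 * u n + k2 * w n)" unfolding eq_neg_iff_add_eq_0
      using assms(3)[of n] by (simp add: algebra_simps)
    then have "z n = - (k0 * p n + k1 * u n + k2 * w n) / k3"
      using False by (simp add: eq_divide_eq mult.commute)
    then show "z n = (- k0 / k3) * p n + (- k1 / k3) * u n + (- k2 / k3) * w n"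
      by (simp add: add_divide_distrib diff_divide_distrib)
  qed
  then show ?thesis using assms(2) unfolding span3_def by blast
qed

lemma spans4_if_notin_span3:
  assumes "indep3 p u w" "pt4 p" "pt4 u" "pt4 w" "pt4 z" "z \<notin> span3 p u w"
  shows "spans4 p u w z"
  unfolding spans4_def
proof (intro allI impI)
  fix y assume "pt4 y"
  then obtain k0 k1 k2 k3 k4 where k: "k0 \<noteq> 0 \<or> k1 \<noteq> 0 \<or> k2 \<noteq> 0 \<or> k3 \<noteq> 0 \<or> k4 \<noteq> 0"
    "\<forall>n. k0 * p n + k1 * u n + k2 * w n + k3 * z n + k4 * y n = 0"
    using pt4_five_dependent[OF assms(2-5)] by blast
  have "k4 \<noteq> 0"
    using k indep4_if_notin_span3[OF assms(1,6), of k0 k1 k2 k3] by auto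
  have "y n = (- k0 / k4) * p n + (- k1 / k4) * u n + (- k2 / k4) * w n + (- k3 / k4) * z n" for n
  proof -
    have "k4 * y n = - (k0 * p n + k1 * u n + k2 * w n + k3 * z n)" unfolding eq_neg_iff_add_eq_0
      using k(2)[rule_format, of n] by (simp add: algebra_simps)
    then have "y n = - (k0 * p n + k1 * u n + k2 * w n + k3 * z n) / k4"
      using \<open>k4 \<noteq> 0\<close> by (simp add: eq_divide_eq mult.commute)
    then show ?thesis by (simp add: add_divide_distrib diff_divide_distrib)
  qed
  then show "\<exists>a b c d. \<forall>n. y n = a * p n + b * u n + c * w n + d * z n" by blast
qed

lemma exists_spans4:
  assumes "indep3 p u w" "pt4 p" "pt4 u" "pt4 w"
  obtains e where "pt4 e" "spans4 p u w e"
proof -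
  obtain m where "m < 4" "unit_vec m \<notin> span3 p u w" using exists_unit_vec_notin_span3 by blast
  moreover have "pt4 (unit_vec m)" using \<open>m < 4\<close> unfolding pt4_def unit_vec_def by auto
  ultimately show ?thesis using spans4_if_notin_span3[OF assms] that by blast
qed

section \<open>The polar form of the cubic\<close>

definition cubic_polar ::
    "(nat \<Rightarrow> nat \<Rightarrow> nat \<Rightarrow> rat) \<Rightarrow> (nat \<Rightarrow> 'a::field_char_0) \<Rightarrow> (nat \<Rightarrow> 'a) \<Rightarrow> (nat \<Rightarrow> 'a) \<Rightarrow> 'a" where
  "cubic_polar c x y z = (\<Sum>i<4. \<Sum>j<4. \<Sum>k<4. of_rat (c i j k) * x i * y j * z k)"

definition cubic_dderiv :: "(nat \<Rightarrow> nat \<Rightarrow> nat \<Rightarrow> rat) \<Rightarrow> (nat \<Rightarrow> complex) \<Rightarrow> (nat \<Rightarrow> complex) \<Rightarrow> complex" where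
  "cubic_dderiv c y x = (\<Sum>m<4. y m * cubic_deriv c m x)"

lemma cubic_eval_eq_polar: "cubic_eval c x = cubic_polar c x x x"
  unfolding cubic_eval_def cubic_polar_def ..

lemma cubic_polar_of_rat_vec:
  "cubic_polar c (of_rat_vec x) (of_rat_vec y) (of_rat_vec z) = of_rat (cubic_polar c x y z)"
  unfolding cubic_polar_def of_rat_vec_def by (simp add: of_rat_sum of_rat_mult)

lemma cubic_polar_add:
  "cubic_polar c (\<lambda>n. a n + b n) y z = cubic_polar c a y z + cubic_polar c b y z"
  "cubic_polar c x (\<lambda>n. a n + b n) z = cubic_polar c x a z + cubic_polar c x b z"
  "cubic_polar c x y (\<lambda>n. a n + b n) = cubic_polar c x y a + cubic_polar c x y b"
  unfolding cubic_polar_def by (simp_all add: algebra_simps sum.distrib)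

lemma cubic_polar_scale:
  "cubic_polar c (\<lambda>n. s * a n) y z = s * cubic_polar c a y z"
  "cubic_polar c x (\<lambda>n. s * a n) z = s * cubic_polar c x a z"
  "cubic_polar c x y (\<lambda>n. s * a n) = s * cubic_polar c x y a"
  unfolding cubic_polar_def by (simp_all add: algebra_simps sum_distrib_left)

lemmas cubic_polar_linear = cubic_polar_add cubic_polar_scale

lemma sum_swap_outer4:
  "(\<Sum>m\<in>A. \<Sum>i\<in>B. \<Sum>j\<in>C. \<Sum>k\<in>D. f m i j k) = (\<Sum>i\<in>B. \<Sum>j\<in>C. \<Sum>k\<in>D. \<Sum>m\<in>A. f m i j k)"
proof -
  have "(\<Sum>m\<in>A. \<Sum>i\<in>B. \<Sum>j\<in>C. \<Sum>k\<in>D. f m i j k) = (\<Sum>i\<in>B. \<Sum>m\<in>A. \<Sum>j\<in>C. \<Sum>k\<in>D. f m i j k)"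
    by (rule sum.swap)
  also have "\<dots> = (\<Sum>i\<in>B. \<Sum>j\<in>C. \<Sum>m\<in>A. \<Sum>k\<in>D. f m i j k)"
    by (intro sum.cong refl) (rule sum.swap)
  also have "\<dots> = (\<Sum>i\<in>B. \<Sum>j\<in>C. \<Sum>k\<in>D. \<Sum>m\<in>A. f m i j k)"
    by (intro sum.cong refl) (rule sum.swap)
  finally show ?thesis .
qed

lemma cubic_dderiv_eq_polar:
  "cubic_dderiv c y x = cubic_polar c y x x + cubic_polar c x y x + cubic_polar c x x y"
proof -
  define X where "X m i j k = of_rat (c i j k) *
      ((if i = m then 1 else 0) * x j * x k + x i * (if j = m then 1 else 0) * x k
       + x i * x j * (if k = m then (1::complex) else 0))" for m i j k
  have delta: "(\<Sum>m<4. y m * (if i = m then 1 else 0)) = y i" if "i < 4" for i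
  proof -
    have "y m * (if i = m then 1 else 0) = (if i = m then y m else 0)" for m by simp
    then show ?thesis using that by (simp add: sum.delta)
  qed
  have "cubic_dderiv c y x = (\<Sum>m<4. \<Sum>i<4. \<Sum>j<4. \<Sum>k<4. y m * X m i j k)"
    unfolding cubic_dderiv_def cubic_deriv_def X_def by (simp only: sum_distrib_left)
  also have "\<dots> = (\<Sum>i<4. \<Sum>j<4. \<Sum>k<4. \<Sum>m<4. y m * X m i j k)"
    by (rule sum_swap_outer4)
  also have "\<dots> = (\<Sum>i<4. \<Sum>j<4. \<Sum>k<4. of_rat (c i j k) * y i * x j * x k
      + of_rat (c i j k) * x i * y j * x k + of_rat (c i j k) * x i * x j * y k)"
  proof (intro sum.cong refl)
    fix i j k assume "i \<in> {..<4::nat}" "j \<in> {..<4::nat}" "k \<in> {..<4::nat}"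
    then have ijk: "i < 4" "j < 4" "k < 4" by auto
    have "(\<Sum>m<4. y m * X m i j k)
      = of_rat (c i j k) * x j * x k * (\<Sum>m<4. y m * (if i = m then 1 else 0))
       + of_rat (c i j k) * x i * x k * (\<Sum>m<4. y m * (if j = m then 1 else 0))
       + of_rat (c i j k) * x i * x j * (\<Sum>m<4. y m * (if k = m then 1 else 0))"
      unfolding X_def by (simp add: sum_distrib_left sum.distrib algebra_simps)
    then show "(\<Sum>m<4. y m * X m i j k) = of_rat (c i j k) * y i * x j * x k
      + of_rat (c i j k) * x i * y j * x k + of_rat (c i j k) * x i * x j * y k"
      using ijk by (simp add: delta algebra_simps)
  qed
  also have "\<dots> = cubic_polar c y x x + cubic_polar c x y x + cubic_polar c x x y"
    unfolding cubic_polar_def by (simp only: sum.distrib)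
  finally show ?thesis .
qed

lemma cubic_dderiv_linear:
  "cubic_dderiv c (\<lambda>n. a n + b n) x = cubic_dderiv c a x + cubic_dderiv c b x"
  "cubic_dderiv c (\<lambda>n. s * a n) x = s * cubic_dderiv c a x"
  unfolding cubic_dderiv_def by (simp_all add: algebra_simps sum.distrib sum_distrib_left)

lemma cubic_dderiv_unit_vec: "m < 4 \<Longrightarrow> cubic_dderiv c (unit_vec m) x = cubic_deriv c m x"
proof -
  assume m: "m < 4"
  have "unit_vec m n * cubic_deriv c n x = (if m = n then cubic_deriv c n x else 0)" for n
    unfolding unit_vec_def by simp
  then show ?thesis unfolding cubic_dderiv_def using m by (simp add: sum.delta)
qed

lemma binary_cubic_eq_zero:
  fixes A B C D :: complex
  assumes "\<And>s t. A * s^3 + B * s^2 * t + C * s * t^2 + D * t^3 = 0"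
  shows "A = 0" "B = 0" "C = 0" "D = 0"
proof -
  have "A = 0" "D = 0" using assms[of 1 0] assms[of 0 1] by simp_all
  moreover have "B + C = 0" "C - B = 0" using assms[of 1 1] assms[of 1 "-1"] calculation by simp_all
  ultimately show "A = 0" "B = 0" "C = 0" "D = 0" by auto
qed

lemma cubic_eval_span2:
  "cubic_eval c (\<lambda>n. s * a n + t * b n) = cubic_polar c a a a * s^3
     + (cubic_polar c a a b + cubic_polar c a b a + cubic_polar c b a a) * s^2 * t
     + (cubic_polar c a b b + cubic_polar c b a b + cubic_polar c b b a) * s * t^2
     + cubic_polar c b b b * t^3"
  unfolding cubic_eval_eq_polar
  by (simp add: cubic_polar_linear algebra_simps power2_eq_square power3_eq_cube)

lemma polar_eqs_if_line_on_cubic: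
  assumes "\<And>s t. cubic_eval c (\<lambda>n. s * a n + t * b n) = 0"
  shows "cubic_polar c a a a = 0" "cubic_polar c a a b + cubic_polar c a b a + cubic_polar c b a a = 0"
    "cubic_polar c a b b + cubic_polar c b a b + cubic_polar c b b a = 0" "cubic_polar c b b b = 0"
  using binary_cubic_eq_zero assms unfolding cubic_eval_span2 by blast+

lemma cubic_dderiv_span2:
  "cubic_dderiv c e (\<lambda>n. s * a n + t * b n) =
    (cubic_polar c e a a + cubic_polar c a e a + cubic_polar c a a e) * s^2
    + (cubic_polar c e a b + cubic_polar c e b a + cubic_polar c a e b + cubic_polar c b e a
       + cubic_polar c a b e + cubic_polar c b a e) * s * t
    + (cubic_polar c e b b + cubic_polar c b e b + cubic_polar c b b e) * t^2"
  unfolding cubic_dderiv_eq_polar by (simp add: cubic_polar_linear algebra_simps power2_eq_square)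

lemma binary_quadratic_has_zero:
  fixes A B C :: complex
  obtains s t where "s \<noteq> 0 \<or> t \<noteq> 0" "A * s^2 + B * s * t + C * t^2 = 0"
proof (cases "A = 0")
  case True
  then show ?thesis using that[of 1 0] by simp
next
  case False
  define r where "r = csqrt (B^2 - 4 * A * C)"
  define s where "s = (- B + r) / (2 * A)"
  have "4 * A * (A * s^2 + B * s + C) = (- B + r)^2 + 2 * B * (- B + r) + 4 * A * C"
    unfolding s_def using False by (simp add: field_simps power2_eq_square)
  also have "\<dots> = r^2 - B^2 + 4 * A * C" by (simp add: algebra_simps power2_eq_square)
  also have "\<dots> = 0" unfolding r_def by simp
  finally have "A * s^2 + B * s + C = 0" using False by simp
  then show ?thesis using that[of s 1] by simp
qed

lemma smooth_cubic_dderiv_nonzero: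
  assumes "smooth_cubic c" "pt4 x" "x \<noteq> zero4" "cubic_eval c x = 0" "spans4 p u w e"
    and "cubic_dderiv c p x = 0" "cubic_dderiv c u x = 0" "cubic_dderiv c w x = 0" "cubic_dderiv c e x = 0"
  shows False
proof -
  have "cubic_deriv c m x = 0" if m: "m < 4" for m
  proof -
    have "pt4 (unit_vec m)" unfolding pt4_def unit_vec_def using m by auto
    then obtain a b g d where "\<forall>n. unit_vec m n = a * p n + b * u n + g * w n + d * e n"
      using assms(5) unfolding spans4_def by blast
    then have "unit_vec m = (\<lambda>n. a * p n + b * u n + g * w n + d * e n)" by auto
    then have "cubic_dderiv c (unit_vec m) x = 0" using assms(6-9) by (simp add: cubic_dderiv_linear)
    then show ?thesis using cubic_dderiv_unit_vec[OF m] by simp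
  qed
  then show False using assms(1-4) unfolding smooth_cubic_def by blast
qed

section \<open>The plane through two meeting lines\<close>

definition plane_lam ::
    "(nat \<Rightarrow> nat \<Rightarrow> nat \<Rightarrow> rat) \<Rightarrow> (nat \<Rightarrow> 'a::field_char_0) \<Rightarrow> (nat \<Rightarrow> 'a) \<Rightarrow> (nat \<Rightarrow> 'a) \<Rightarrow> 'a" where
  "plane_lam c p u w = cubic_polar c p u w + cubic_polar c p w u + cubic_polar c u p w
     + cubic_polar c u w p + cubic_polar c w p u + cubic_polar c w u p"

definition plane_mu ::
    "(nat \<Rightarrow> nat \<Rightarrow> nat \<Rightarrow> rat) \<Rightarrow> (nat \<Rightarrow> 'a::field_char_0) \<Rightarrow> (nat \<Rightarrow> 'a) \<Rightarrow> (nat \<Rightarrow> 'a) \<Rightarrow> 'a" where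
  "plane_mu c p u w = cubic_polar c u u w + cubic_polar c u w u + cubic_polar c w u u"

lemma plane_lam_swap: "plane_lam c p w u = plane_lam c p u w"
  unfolding plane_lam_def by (simp add: algebra_simps)

lemma plane_lam_of_rat_vec:
  "plane_lam c (of_rat_vec p) (of_rat_vec u) (of_rat_vec w) = of_rat (plane_lam c p u w)"
  unfolding plane_lam_def cubic_polar_of_rat_vec by (simp add: of_rat_add)

lemma plane_mu_of_rat_vec:
  "plane_mu c (of_rat_vec p) (of_rat_vec u) (of_rat_vec w) = of_rat (plane_mu c p u w)"
  unfolding plane_mu_def cubic_polar_of_rat_vec by (simp add: of_rat_add)

locale two_lines_on_cubic =
  fixes c :: "nat \<Rightarrow> nat \<Rightarrow> nat \<Rightarrow> rat" and p u w :: "nat \<Rightarrow> complex"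
  assumes pt4: "pt4 p" "pt4 u" "pt4 w"
    and indep: "indep3 p u w"
    and first_line_on_cubic: "\<And>s t. cubic_eval c (\<lambda>n. s * p n + t * u n) = 0"
    and second_line_on_cubic: "\<And>s t. cubic_eval c (\<lambda>n. s * p n + t * w n) = 0"
begin

lemma swap: "two_lines_on_cubic c p w u"
  using pt4 indep3_swap[OF indep] first_line_on_cubic second_line_on_cubic
  by unfold_locales auto

lemma polar_relations:
  "cubic_polar c p p p = 0" "cubic_polar c u u u = 0" "cubic_polar c w w w = 0"
  "cubic_polar c u p p = - cubic_polar c p p u - cubic_polar c p u p"
  "cubic_polar c u u p = - cubic_polar c p u u - cubic_polar c u p u"
  "cubic_polar c w p p = - cubic_polar c p p w - cubic_polar c p w p"
  "cubic_polar c w w p = - cubic_polar c p w w - cubic_polar c w p w"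
  using polar_eqs_if_line_on_cubic[OF first_line_on_cubic] polar_eqs_if_line_on_cubic[OF second_line_on_cubic]
  by (simp_all add: eq_neg_iff_add_eq_0 algebra_simps)

text \<open>The plane section is the two lines (b = 0 and g = 0) together with the residual line
  given by the linear factor.\<close>
lemma cubic_eval_plane:
  "cubic_eval c (\<lambda>n. a * p n + b * u n + g * w n) =
    b * g * (plane_lam c p u w * a + plane_mu c p u w * b + plane_mu c p w u * g)"
  unfolding cubic_eval_eq_polar plane_lam_def plane_mu_def
  by (simp add: cubic_polar_linear polar_relations algebra_simps power2_eq_square power3_eq_cube)

lemma cubic_dderiv_plane:
  "cubic_dderiv c p (\<lambda>n. a * p n + b * u n + g * w n) = b * g * plane_lam c p u w"
  "cubic_dderiv c u (\<lambda>n. a * p n + b * u n + g * w n) =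
    g * (plane_lam c p u w * a + 2 * plane_mu c p u w * b + plane_mu c p w u * g)"
  "cubic_dderiv c w (\<lambda>n. a * p n + b * u n + g * w n) =
    b * (plane_lam c p u w * a + plane_mu c p u w * b + 2 * plane_mu c p w u * g)"
  unfolding cubic_dderiv_eq_polar plane_lam_def plane_mu_def
  by (simp_all add: cubic_polar_linear polar_relations algebra_simps)

text \<open>If both coefficients vanished, the first line would be a double component of the
  plane section, and smoothness fails at the point of that line where the derivative in a
  fourth direction e (a binary quadratic form on the line) has a zero.\<close>
lemma plane_coeffs_nonzero:
  assumes "smooth_cubic c"
  shows "plane_lam c p u w \<noteq> 0 \<or> plane_mu c p u w \<noteq> 0"
proof (rule ccontr)
  assume "\<not> ?thesis"
  then have zero: "plane_lam c p u w = 0" "plane_mu c p u w = 0" by auto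
  obtain e where e: "pt4 e" "spans4 p u w e" using exists_spans4[OF indep pt4] by blast
  obtain s t where st: "s \<noteq> 0 \<or> t \<noteq> 0"
    and q: "(cubic_polar c e p p + cubic_polar c p e p + cubic_polar c p p e) * s^2
    + (cubic_polar c e p u + cubic_polar c e u p + cubic_polar c p e u + cubic_polar c u e p
       + cubic_polar c p u e + cubic_polar c u p e) * s * t
    + (cubic_polar c e u u + cubic_polar c u e u + cubic_polar c u u e) * t^2 = 0"
    by (rule binary_quadratic_has_zero)
  define x where "x = (\<lambda>n. s * p n + t * u n)"
  have x3: "x = (\<lambda>n. s * p n + t * u n + 0 * w n)" unfolding x_def by simp
  have "pt4 x" unfolding x_def by (rule pt4_lincomb[OF pt4(1,2)])
  moreover have "x \<noteq> zero4"
  proof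
    assume "x = zero4"
    then have "\<And>n. s * p n + t * u n + 0 * w n = 0" unfolding x_def zero4_def by (simp add: fun_eq_iff)
    then have "s = 0 \<and> t = 0 \<and> (0::complex) = 0" by (rule indep3D[OF indep])
    then show False using st by simp
  qed
  moreover have "cubic_eval c x = 0" unfolding x_def by (rule first_line_on_cubic)
  moreover have "cubic_dderiv c p x = 0" "cubic_dderiv c u x = 0" "cubic_dderiv c w x = 0"
    unfolding x3 cubic_dderiv_plane using zero by simp_all
  moreover have "cubic_dderiv c e x = 0" unfolding x_def cubic_dderiv_span2 using q .
  ultimately show False using smooth_cubic_dderiv_nonzero[OF assms _ _ _ e(2)] by blast
qed

text \<open>A line through p on the surface leaves the plane only if p is a singular point: all
  directional derivatives at p vanish, along the plane by the relations above and along the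
  line because it lies on the surface.\<close>
lemma line_through_first_point_in_plane:
  assumes "smooth_cubic c" "pt4 z" "\<And>s t. cubic_eval c (\<lambda>n. s * p n + t * z n) = 0"
  shows "z \<in> span3 p u w"
proof (rule ccontr)
  assume "z \<notin> span3 p u w"
  then have spans: "spans4 p u w z" by (rule spans4_if_notin_span3[OF indep pt4 assms(2)])
  have "p \<noteq> zero4"
  proof
    assume "p = zero4"
    then have "\<And>n. 1 * p n + 0 * u n + 0 * w n = 0" by (simp add: zero4_def)
    from indep3D[OF indep this] show False by simp
  qed
  moreover have "cubic_eval c p = 0" using first_line_on_cubic[of 1 0] by simp
  moreover have "cubic_dderiv c p p = 0" "cubic_dderiv c u p = 0" "cubic_dderiv c w p = 0"
    using cubic_dderiv_plane[of 1 0 0] by simp_all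
  moreover have "cubic_dderiv c z p = 0"
    using polar_eqs_if_line_on_cubic(2)[OF assms(3)] unfolding cubic_dderiv_eq_polar by (simp add: algebra_simps)
  ultimately show False using smooth_cubic_dderiv_nonzero[OF assms(1) pt4(1) _ _ spans] by blast
qed

end

lemma linear_forms_product_eq_zero:
  fixes a1 a2 b1 b2 g1 g2 :: "'a::{idom, ring_char_0}"
  assumes "\<And>s t. (s * a1 + t * a2) * (s * b1 + t * b2) * (s * g1 + t * g2) = 0"
  shows "(a1 = 0 \<and> a2 = 0) \<or> (b1 = 0 \<and> b2 = 0) \<or> (g1 = 0 \<and> g2 = 0)"
proof -
  have "poly ([:a2, a1:] * [:b2, b1:] * [:g2, g1:]) s = 0" for s
    using assms[of s 1] by (simp add: algebra_simps)
  then have "[:a2, a1:] * [:b2, b1:] * [:g2, g1:] = 0" using poly_all_0_iff_0 by blast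
  then show ?thesis by auto
qed

lemma rat_kernel_basis:
  fixes l m1 m2 :: rat
  assumes "l \<noteq> 0 \<or> m1 \<noteq> 0"
  obtains a1 b1 g1 a2 b2 g2 :: rat where
    "l * a1 + m1 * b1 + m2 * g1 = 0" "l * a2 + m1 * b2 + m2 * g2 = 0"
    "\<And>s t :: complex. s * of_rat a1 + t * of_rat a2 = 0 \<Longrightarrow> s * of_rat b1 + t * of_rat b2 = 0 \<Longrightarrow>
       s * of_rat g1 + t * of_rat g2 = 0 \<Longrightarrow> s = 0 \<and> t = 0"
    "\<And>a b g :: complex. of_rat l * a + of_rat m1 * b + of_rat m2 * g = 0 \<Longrightarrow>
       \<exists>s t. a = s * of_rat a1 + t * of_rat a2 \<and> b = s * of_rat b1 + t * of_rat b2 \<and>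
         g = s * of_rat g1 + t * of_rat g2"
proof (cases "l = 0")
  case False
  show ?thesis
  proof (rule that[of m1 "- l" 0 m2 0 "- l"])
    fix a b g :: complex assume "of_rat l * a + of_rat m1 * b + of_rat m2 * g = 0"
    then have "of_rat l * a = - (of_rat m1 * b + of_rat m2 * g)"
      unfolding eq_neg_iff_add_eq_0 by (simp add: algebra_simps)
    then have "a = (- b / of_rat l) * of_rat m1 + (- g / of_rat l) * of_rat m2"
      using False by (simp add: field_simps)
    then show "\<exists>s t. a = s * of_rat m1 + t * of_rat m2 \<and> b = s * of_rat (- l) + t * of_rat 0 \<and>
        g = s * of_rat 0 + t * of_rat (- l)"
      using False by (intro exI[of _ "- b / of_rat l"] exI[of _ "- g / of_rat l"]) (simp add: of_rat_minus)
  qed (use False in \<open>simp_all add: algebra_simps of_rat_minus\<close>)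
next
  case True
  then have "m1 \<noteq> 0" using assms by simp
  show ?thesis
  proof (rule that[of 1 0 0 0 "- m2" m1])
    fix a b g :: complex assume "of_rat l * a + of_rat m1 * b + of_rat m2 * g = 0"
    then have "of_rat m1 * b = - (of_rat m2 * g)"
      using True unfolding eq_neg_iff_add_eq_0 by (simp add: algebra_simps)
    then have "b = (g / of_rat m1) * of_rat (- m2)"
      using \<open>m1 \<noteq> 0\<close> by (simp add: field_simps of_rat_minus)
    then show "\<exists>s t. a = s * of_rat 1 + t * of_rat 0 \<and> b = s * of_rat 0 + t * of_rat (- m2) \<and>
        g = s * of_rat 0 + t * of_rat m1"
      using \<open>m1 \<noteq> 0\<close> by (intro exI[of _ a] exI[of _ "g / of_rat m1"]) simp
  qed (use True \<open>m1 \<noteq> 0\<close> in \<open>simp_all add: algebra_simps\<close>)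
qed

locale rat_plane_section =
  fixes c :: "nat \<Rightarrow> nat \<Rightarrow> nat \<Rightarrow> rat" and p u w :: "nat \<Rightarrow> rat"
  assumes smooth: "smooth_cubic c"
    and two_lines: "two_lines_on_cubic c (of_rat_vec p) (of_rat_vec u) (of_rat_vec w)"
begin

sublocale two_lines_on_cubic c "of_rat_vec p" "of_rat_vec u" "of_rat_vec w"
  by (rule two_lines)

abbreviation P :: "nat \<Rightarrow> complex" where "P \<equiv> of_rat_vec p"
abbreviation U :: "nat \<Rightarrow> complex" where "U \<equiv> of_rat_vec u"
abbreviation W :: "nat \<Rightarrow> complex" where "W \<equiv> of_rat_vec w"

definition plane_pt :: "complex \<Rightarrow> complex \<Rightarrow> complex \<Rightarrow> nat \<Rightarrow> complex" where
  "plane_pt a b g = (\<lambda>n. a * P n + b * U n + g * W n)"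

definition lam :: rat where "lam = plane_lam c p u w"
definition mu1 :: rat where "mu1 = plane_mu c p u w"
definition mu2 :: rat where "mu2 = plane_mu c p w u"

definition resid :: "complex \<Rightarrow> complex \<Rightarrow> complex \<Rightarrow> complex" where
  "resid a b g = of_rat lam * a + of_rat mu1 * b + of_rat mu2 * g"

definition third_line :: "(nat \<Rightarrow> complex) set" where
  "third_line = {plane_pt a b g | a b g. resid a b g = 0}"

lemma plane_pt_eq_iff: "plane_pt a b g = plane_pt a' b' g' \<longleftrightarrow> a = a' \<and> b = b' \<and> g = g'"
  unfolding plane_pt_def using indep3_coords_unique[OF indep] by blast

lemma zero4_eq_plane_pt: "zero4 = plane_pt 0 0 0"
  unfolding zero4_def plane_pt_def by simp

lemma plane_pt_eq_zero_iff: "plane_pt a b g = zero4 \<longleftrightarrow> a = 0 \<and> b = 0 \<and> g = 0"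
  unfolding zero4_eq_plane_pt plane_pt_eq_iff ..

lemma plane_pt_lincomb:
  "(\<lambda>n. s * plane_pt a b g n + t * plane_pt a' b' g' n) =
    plane_pt (s * a + t * a') (s * b + t * b') (s * g + t * g')"
  unfolding plane_pt_def by (simp add: algebra_simps)

lemma of_rat_vec_plane_pt:
  "of_rat_vec (\<lambda>i. a * p i + b * u i + g * w i) = plane_pt (of_rat a) (of_rat b) (of_rat g)"
  unfolding plane_pt_def of_rat_vec_def by (simp add: of_rat_add of_rat_mult)

lemma pt4_plane_pt: "pt4 (plane_pt a b g)"
  using pt4 unfolding plane_pt_def pt4_def by simp

lemma in_span3_iff: "x \<in> span3 P U W \<longleftrightarrow> (\<exists>a b g. x = plane_pt a b g)"
  unfolding span3_def plane_pt_def by simp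

lemma first_line_eq: "span2 P U = {plane_pt a b 0 | a b. True}"
  unfolding span2_def plane_pt_def by auto

lemma second_line_eq: "span2 P W = {plane_pt a 0 g | a g. True}"
  unfolding span2_def plane_pt_def by auto

lemma plane_pt_in_first_line_iff: "plane_pt a b g \<in> span2 P U \<longleftrightarrow> g = 0"
  by (auto simp: first_line_eq plane_pt_eq_iff)

lemma plane_pt_in_second_line_iff: "plane_pt a b g \<in> span2 P W \<longleftrightarrow> b = 0"
  by (auto simp: second_line_eq plane_pt_eq_iff)

lemma plane_pt_in_third_line_iff: "plane_pt a b g \<in> third_line \<longleftrightarrow> resid a b g = 0"
  by (auto simp: third_line_def plane_pt_eq_iff)

lemma resid_lincomb:
  "resid (s * a + t * a') (s * b + t * b') (s * g + t * g') = s * resid a b g + t * resid a' b' g'"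
  unfolding resid_def by (simp add: algebra_simps)

lemma cubic_eval_plane_pt: "cubic_eval c (plane_pt a b g) = b * g * resid a b g"
  unfolding plane_pt_def cubic_eval_plane resid_def lam_def mu1_def mu2_def
  by (simp add: plane_lam_of_rat_vec plane_mu_of_rat_vec)

lemma resid_coeffs_nonzero: "lam \<noteq> 0 \<or> mu1 \<noteq> 0" "lam \<noteq> 0 \<or> mu2 \<noteq> 0"
proof -
  show "lam \<noteq> 0 \<or> mu1 \<noteq> 0"
    using plane_coeffs_nonzero[OF smooth]
    unfolding lam_def mu1_def plane_lam_of_rat_vec plane_mu_of_rat_vec by simp
  show "lam \<noteq> 0 \<or> mu2 \<noteq> 0"
    using two_lines_on_cubic.plane_coeffs_nonzero[OF swap smooth]
    unfolding lam_def mu2_def plane_lam_of_rat_vec plane_mu_of_rat_vec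
    by (simp add: plane_lam_swap[of c p u w])
qed

lemma third_line_eq_span2:
  obtains n1 n2 where "pt4 (of_rat_vec n1)" "pt4 (of_rat_vec n2)" "indep2 (of_rat_vec n1) (of_rat_vec n2)"
    "third_line = span2 (of_rat_vec n1) (of_rat_vec n2)"
proof -
  obtain a1 b1 g1 a2 b2 g2 where ker: "lam * a1 + mu1 * b1 + mu2 * g1 = 0" "lam * a2 + mu1 * b2 + mu2 * g2 = 0"
    and indep_coeffs: "\<And>s t :: complex. s * of_rat a1 + t * of_rat a2 = 0 \<Longrightarrow> s * of_rat b1 + t * of_rat b2 = 0 \<Longrightarrow>
       s * of_rat g1 + t * of_rat g2 = 0 \<Longrightarrow> s = 0 \<and> t = 0"
    and spans: "\<And>a b g :: complex. resid a b g = 0 \<Longrightarrow>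
       \<exists>s t. a = s * of_rat a1 + t * of_rat a2 \<and> b = s * of_rat b1 + t * of_rat b2 \<and>
         g = s * of_rat g1 + t * of_rat g2"
    using rat_kernel_basis[OF resid_coeffs_nonzero(1)] unfolding resid_def by blast
  define n1 where "n1 = (\<lambda>i. a1 * p i + b1 * u i + g1 * w i)"
  define n2 where "n2 = (\<lambda>i. a2 * p i + b2 * u i + g2 * w i)"
  note n12 = of_rat_vec_plane_pt[of a1 b1 g1, folded n1_def] of_rat_vec_plane_pt[of a2 b2 g2, folded n2_def]
  have resid_n: "resid (of_rat a1) (of_rat b1) (of_rat g1) = 0" "resid (of_rat a2) (of_rat b2) (of_rat g2) = 0"
    using ker unfolding resid_def by (simp_all flip: of_rat_mult of_rat_add)
  have "indep2 (of_rat_vec n1) (of_rat_vec n2)"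
    unfolding indep2_def
  proof (intro allI impI)
    fix s t assume "\<forall>n. s * of_rat_vec n1 n + t * of_rat_vec n2 n = 0"
    then have "(\<lambda>n. s * of_rat_vec n1 n + t * of_rat_vec n2 n) = zero4" by (simp add: fun_eq_iff zero4_def)
    then show "s = 0 \<and> t = 0"
      unfolding n12 plane_pt_lincomb plane_pt_eq_zero_iff using indep_coeffs by blast
  qed
  moreover have "third_line = span2 (of_rat_vec n1) (of_rat_vec n2)"
  proof
    show "third_line \<subseteq> span2 (of_rat_vec n1) (of_rat_vec n2)"
    proof
      fix x assume "x \<in> third_line"
      then obtain a b g where x: "x = plane_pt a b g" and "resid a b g = 0" unfolding third_line_def by blast
      then obtain s t where "a = s * of_rat a1 + t * of_rat a2" "b = s * of_rat b1 + t * of_rat b2"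
        "g = s * of_rat g1 + t * of_rat g2" using spans by blast
      then have "x = (\<lambda>n. s * of_rat_vec n1 n + t * of_rat_vec n2 n)"
        unfolding x n12 plane_pt_lincomb by simp
      then show "x \<in> span2 (of_rat_vec n1) (of_rat_vec n2)" by (simp add: span2_mem)
    qed
  next
    show "span2 (of_rat_vec n1) (of_rat_vec n2) \<subseteq> third_line"
    proof
      fix x assume "x \<in> span2 (of_rat_vec n1) (of_rat_vec n2)"
      then obtain s t where "x = (\<lambda>n. s * of_rat_vec n1 n + t * of_rat_vec n2 n)" unfolding span2_def by blast
      then show "x \<in> third_line"
        unfolding n12 plane_pt_lincomb by (simp add: plane_pt_in_third_line_iff resid_lincomb resid_n)
    qed
  qed
  ultimately show ?thesis using that pt4_plane_pt n12 by metis
qed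

lemma third_line_in_rat_lines: "third_line \<in> rat_lines_on c"
proof -
  obtain n1 n2 where "pt4 (of_rat_vec n1)" "pt4 (of_rat_vec n2)" "indep2 (of_rat_vec n1) (of_rat_vec n2)"
    and N: "third_line = span2 (of_rat_vec n1) (of_rat_vec n2)"
    by (rule third_line_eq_span2)
  then have "rat_line third_line" using rat_line_span2 by simp
  moreover have "cubic_eval c x = 0" if "x \<in> third_line" for x
    using that unfolding third_line_def by (auto simp: cubic_eval_plane_pt)
  ultimately show ?thesis unfolding rat_lines_on_def by blast
qed

lemma third_line_ne_first: "third_line \<noteq> span2 P U"
proof
  assume "third_line = span2 P U"
  then have "plane_pt 1 0 0 \<in> third_line" "plane_pt 0 1 0 \<in> third_line"
    using plane_pt_in_first_line_iff by auto
  then show False using resid_coeffs_nonzero(1)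
    unfolding plane_pt_in_third_line_iff resid_def by simp
qed

lemma third_line_ne_second: "third_line \<noteq> span2 P W"
proof
  assume "third_line = span2 P W"
  then have "plane_pt 1 0 0 \<in> third_line" "plane_pt 0 0 1 \<in> third_line"
    using plane_pt_in_second_line_iff by auto
  then show False using resid_coeffs_nonzero(2)
    unfolding plane_pt_in_third_line_iff resid_def by simp
qed

lemma third_line_meets_first: "lines_meet third_line (span2 P U)"
proof -
  let ?x = "plane_pt (of_rat mu1) (- of_rat lam) 0"
  have "?x \<in> third_line" unfolding plane_pt_in_third_line_iff resid_def by simp
  moreover have "?x \<in> span2 P U" unfolding plane_pt_in_first_line_iff by simp
  moreover have "?x \<noteq> zero4" using resid_coeffs_nonzero(1) unfolding plane_pt_eq_zero_iff by auto
  ultimately show ?thesis unfolding lines_meet_def by blast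
qed

lemma third_line_meets_second: "lines_meet third_line (span2 P W)"
proof -
  let ?x = "plane_pt (of_rat mu2) 0 (- of_rat lam)"
  have "?x \<in> third_line" unfolding plane_pt_in_third_line_iff resid_def by simp
  moreover have "?x \<in> span2 P W" unfolding plane_pt_in_second_line_iff by simp
  moreover have "?x \<noteq> zero4" using resid_coeffs_nonzero(2) unfolding plane_pt_eq_zero_iff by auto
  ultimately show ?thesis unfolding lines_meet_def by blast
qed

text \<open>A line meets the plane, and the plane meets the surface in the three lines.\<close>
lemma rat_line_meets_plane_section:
  assumes K: "K \<in> rat_lines_on c"
  shows "lines_meet K (span2 P U) \<or> lines_meet K (span2 P W) \<or> lines_meet K third_line"
proof -
  obtain k1 k2 where kk: "pt4 (of_rat_vec k1)" "pt4 (of_rat_vec k2)" "indep2 (of_rat_vec k1) (of_rat_vec k2)"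
    "K = span2 (of_rat_vec k1) (of_rat_vec k2)"
    using K rat_line_eq_span2 unfolding rat_lines_on_def by blast
  obtain x0 x1 x2 x3 x4 where x: "x0 \<noteq> 0 \<or> x1 \<noteq> 0 \<or> x2 \<noteq> 0 \<or> x3 \<noteq> 0 \<or> x4 \<noteq> 0"
    "\<forall>n. x0 * P n + x1 * U n + x2 * W n + x3 * of_rat_vec k1 n + x4 * of_rat_vec k2 n = 0"
    using pt4_five_dependent[OF pt4 kk(1,2)] by blast
  define y where "y = plane_pt x0 x1 x2"
  have yK: "y = (\<lambda>n. (- x3) * of_rat_vec k1 n + (- x4) * of_rat_vec k2 n)"
  proof
    fix n show "y n = (- x3) * of_rat_vec k1 n + (- x4) * of_rat_vec k2 n"
      using x(2)[rule_format, of n] unfolding y_def plane_pt_def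
      by (simp add: algebra_simps eq_neg_iff_add_eq_0)
  qed
  have "y \<in> K" unfolding kk(4) yK by (rule span2_mem)
  moreover have "y \<noteq> zero4"
  proof
    assume "y = zero4"
    then have z3: "x0 = 0 \<and> x1 = 0 \<and> x2 = 0" unfolding y_def plane_pt_eq_zero_iff .
    then have "\<And>n. x3 * of_rat_vec k1 n + x4 * of_rat_vec k2 n = 0" using x(2) by simp
    then have "x3 = 0 \<and> x4 = 0" by (rule indep2D[OF kk(3)])
    then show False using x(1) z3 by simp
  qed
  moreover have "cubic_eval c y = 0" using K \<open>y \<in> K\<close> unfolding rat_lines_on_def by blast
  then have "y \<in> span2 P W \<or> y \<in> span2 P U \<or> y \<in> third_line"
    unfolding y_def cubic_eval_plane_pt plane_pt_in_first_line_iff plane_pt_in_second_line_iff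
      plane_pt_in_third_line_iff by simp
  ultimately show ?thesis unfolding lines_meet_def by blast
qed

text \<open>On a line of the plane the cubic factors into three linear forms, coming from the two
  given lines and the third line; the line is one of the three.\<close>
lemma line_in_plane_eq_third_line:
  assumes x: "x \<in> span3 P U W" and y: "y \<in> span3 P U W" and xy: "indep2 x y"
    and on: "\<And>s t. cubic_eval c (\<lambda>n. s * x n + t * y n) = 0"
    and ne: "span2 x y \<noteq> span2 P U" "span2 x y \<noteq> span2 P W"
  shows "span2 x y = third_line"
proof -
  obtain a1 b1 g1 a2 b2 g2 where xe: "x = plane_pt a1 b1 g1" and ye: "y = plane_pt a2 b2 g2"
    using x y unfolding in_span3_iff by blast
  have "(s * b1 + t * b2) * (s * g1 + t * g2) * (s * resid a1 b1 g1 + t * resid a2 b2 g2) = 0" for s t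
    using on[of s t] unfolding xe ye plane_pt_lincomb cubic_eval_plane_pt resid_lincomb .
  then have "(b1 = 0 \<and> b2 = 0) \<or> (g1 = 0 \<and> g2 = 0) \<or> (resid a1 b1 g1 = 0 \<and> resid a2 b2 g2 = 0)"
    by (rule linear_forms_product_eq_zero)
  moreover have "\<not> (b1 = 0 \<and> b2 = 0)"
  proof
    assume "b1 = 0 \<and> b2 = 0"
    then have "x \<in> span2 P W" "y \<in> span2 P W" unfolding xe ye plane_pt_in_second_line_iff by simp_all
    then show False using ne(2) span2_eq_if_indep2[OF indep2_if_indep3(2)[OF indep] _ _ xy] by blast
  qed
  moreover have "\<not> (g1 = 0 \<and> g2 = 0)"
  proof
    assume "g1 = 0 \<and> g2 = 0"
    then have "x \<in> span2 P U" "y \<in> span2 P U" unfolding xe ye plane_pt_in_first_line_iff by simp_all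
    then show False using ne(1) span2_eq_if_indep2[OF indep2_if_indep3(1)[OF indep] _ _ xy] by blast
  qed
  ultimately have "x \<in> third_line" "y \<in> third_line"
    unfolding xe ye plane_pt_in_third_line_iff by blast+
  moreover obtain n1 n2 where "indep2 (of_rat_vec n1) (of_rat_vec n2)"
    "third_line = span2 (of_rat_vec n1) (of_rat_vec n2)" by (rule third_line_eq_span2)
  ultimately show ?thesis using span2_eq_if_indep2[OF _ _ _ xy] by metis
qed

lemma rat_line_through_first_point_eq_third_line:
  assumes K: "K \<in> rat_lines_on c" and PK: "P \<in> K" and ne: "K \<noteq> span2 P U" "K \<noteq> span2 P W"
  shows "K = third_line"
proof -
  obtain k1 k2 where kk: "pt4 (of_rat_vec k1)" "pt4 (of_rat_vec k2)" "indep2 (of_rat_vec k1) (of_rat_vec k2)"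
    "K = span2 (of_rat_vec k1) (of_rat_vec k2)"
    using K rat_line_eq_span2 unfolding rat_lines_on_def by blast
  have P: "P = plane_pt 1 0 0" unfolding plane_pt_def by simp
  then have "P \<noteq> zero4" by (simp add: plane_pt_eq_zero_iff)
  then obtain z where z: "z \<in> {of_rat_vec k1, of_rat_vec k2}" "indep2 P z" "span2 P z = K"
    using span2_through_point[OF kk(3)] PK kk(4) by blast
  have "pt4 z" using z(1) kk(1,2) by blast
  moreover have on: "\<And>s t. cubic_eval c (\<lambda>n. s * P n + t * z n) = 0"
    using cubic_eval_lincomb_on_rat_line[OF K] span2_mem_left span2_mem_right z(3) by blast
  ultimately have "z \<in> span3 P U W" using line_through_first_point_in_plane[OF smooth] by blast
  moreover have "P \<in> span3 P U W" unfolding in_span3_iff using P by blast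
  ultimately show ?thesis using line_in_plane_eq_third_line[OF _ _ z(2) on] z(3) ne by simp
qed

text \<open>If K meets the two lines in independent points it lies in the plane; otherwise it
  meets both in their common point.\<close>
lemma rat_line_meeting_both_eq_third_line:
  assumes K: "K \<in> rat_lines_on c" and ne: "K \<noteq> span2 P U" "K \<noteq> span2 P W"
    and meets: "lines_meet K (span2 P U)" "lines_meet K (span2 P W)"
  shows "K = third_line"
proof -
  obtain x1 where x1: "x1 \<in> K" "x1 \<in> span2 P U" "x1 \<noteq> zero4" using meets(1) unfolding lines_meet_def by blast
  obtain x2 where x2: "x2 \<in> K" "x2 \<in> span2 P W" "x2 \<noteq> zero4" using meets(2) unfolding lines_meet_def by blast
  obtain a1 b1 where x1e: "x1 = plane_pt a1 b1 0" using x1(2) unfolding first_line_eq by blast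
  obtain a2 g2 where x2e: "x2 = plane_pt a2 0 g2" using x2(2) unfolding second_line_eq by blast
  show ?thesis
  proof (cases "indep2 x1 x2")
    case True
    obtain k1 k2 where "indep2 (of_rat_vec k1) (of_rat_vec k2)" "K = span2 (of_rat_vec k1) (of_rat_vec k2)"
      using K rat_line_eq_span2 unfolding rat_lines_on_def by blast
    then have "K = span2 x1 x2" using span2_eq_if_indep2[OF _ _ _ True] x1(1) x2(1) by simp
    moreover have "x1 \<in> span3 P U W" "x2 \<in> span3 P U W" unfolding in_span3_iff x1e x2e by blast+
    ultimately show ?thesis
      using line_in_plane_eq_third_line[OF _ _ True] cubic_eval_lincomb_on_rat_line[OF K x1(1) x2(1)] ne
      by simp
  next
    case False
    then obtain s t where st: "s \<noteq> 0 \<or> t \<noteq> 0" "\<forall>n. s * x1 n + t * x2 n = 0" unfolding indep2_def by blast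
    then have "(\<lambda>n. s * x1 n + t * x2 n) = zero4" unfolding zero4_def by auto
    then have z: "s * a1 + t * a2 = 0" "s * b1 = 0" "t * g2 = 0"
      unfolding x1e x2e plane_pt_lincomb plane_pt_eq_zero_iff by simp_all
    have "b1 = 0"
    proof (rule ccontr)
      assume "b1 \<noteq> 0"
      then have "s = 0" "t \<noteq> 0" using z(2) st(1) by auto
      then have "x2 = zero4" using z unfolding x2e plane_pt_eq_zero_iff by simp
      then show False using x2(3) by simp
    qed
    then have "a1 \<noteq> 0" using x1(3) unfolding x1e plane_pt_eq_zero_iff by simp
    have "rat_line K" using K unfolding rat_lines_on_def by simp
    then have "(\<lambda>n. (1 / a1) * x1 n + 0 * x1 n) \<in> K" using x1(1) x1(1) by (rule rat_line_lincomb)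
    moreover have "P = (\<lambda>n. (1 / a1) * x1 n + 0 * x1 n)"
      unfolding x1e plane_pt_def using \<open>b1 = 0\<close> \<open>a1 \<noteq> 0\<close> by simp
    ultimately have "P \<in> K" by simp
    then show ?thesis using rat_line_through_first_point_eq_third_line[OF K _ ne] by simp
  qed
qed

end

lemma rat_plane_section_exists:
  assumes smooth: "smooth_cubic c" and L: "L \<in> rat_lines_on c" and M: "M \<in> rat_lines_on c"
    and "L \<noteq> M" "lines_meet L M"
  obtains p u w where "rat_plane_section c p u w"
    "L = span2 (of_rat_vec p) (of_rat_vec u)" "M = span2 (of_rat_vec p) (of_rat_vec w)"
proof -
  have rat: "rat_line L" "rat_line M" and on: "\<And>x. x \<in> L \<Longrightarrow> cubic_eval c x = 0" "\<And>x. x \<in> M \<Longrightarrow> cubic_eval c x = 0"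
    using L M unfolding rat_lines_on_def by auto
  obtain x where "x \<in> L" "x \<in> M" "x \<noteq> zero4" using assms(5) unfolding lines_meet_def by blast
  then obtain p where p: "pt4 (of_rat_vec p)" "of_rat_vec p \<in> L" "of_rat_vec p \<in> M" "of_rat_vec p \<noteq> zero4"
    using rat_lines_meet_in_rat_point[OF rat] by blast
  have "\<exists>u. pt4 (of_rat_vec u) \<and> indep2 (of_rat_vec p) (of_rat_vec u) \<and> K = span2 (of_rat_vec p) (of_rat_vec u)"
    if K: "rat_line K" "of_rat_vec p \<in> K" for K
  proof -
    obtain a b where ab: "pt4 (of_rat_vec a)" "pt4 (of_rat_vec b)" "indep2 (of_rat_vec a) (of_rat_vec b)"
      "K = span2 (of_rat_vec a) (of_rat_vec b)"
      using rat_line_eq_span2[OF K(1)] by blast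
    then show ?thesis
      using span2_through_point[OF ab(3) _ p(4)] K(2) by fastforce
  qed
  then obtain u w where u: "pt4 (of_rat_vec u)" "indep2 (of_rat_vec p) (of_rat_vec u)" "L = span2 (of_rat_vec p) (of_rat_vec u)"
    and w: "pt4 (of_rat_vec w)" "indep2 (of_rat_vec p) (of_rat_vec w)" "M = span2 (of_rat_vec p) (of_rat_vec w)"
    using rat p by meson
  have "of_rat_vec w \<notin> span2 (of_rat_vec p) (of_rat_vec u)"
  proof
    assume "of_rat_vec w \<in> span2 (of_rat_vec p) (of_rat_vec u)"
    then have "M = L" using span2_eq_if_indep2[OF u(2) span2_mem_left _ w(2)] u(3) w(3) by simp
    then show False using \<open>L \<noteq> M\<close> by simp
  qed
  then have "indep3 (of_rat_vec p) (of_rat_vec u) (of_rat_vec w)" by (rule indep3_if_notin_span2[OF u(2)])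
  then have "rat_plane_section c p u w"
    using smooth p(1) u w on span2_mem by unfold_locales auto
  then show ?thesis using that u(3) w(3) by blast
qed

section \<open>Triangle configurations\<close>

lemma even_card_if_fixpoint_free_involution:
  assumes "finite A" and "\<And>a. a \<in> A \<Longrightarrow> f a \<in> A \<and> f a \<noteq> a \<and> f (f a) = a"
  shows "even (card A)"
  using assms
proof (induction "card A" arbitrary: A rule: less_induct)
  case less
  show ?case
  proof (cases "A = {}")
    case False
    then obtain a where a: "a \<in> A" by blast
    define A' where "A' = A - {a, f a}"
    have fa: "f a \<in> A" "f a \<noteq> a" using less.prems(2)[OF a] by auto
    have "card {a, f a} \<le> card A" using less.prems(1) a fa by (intro card_mono) auto
    then have card: "card A = card A' + 2"
      using less.prems(1) a fa unfolding A'_def by (simp add: card_Diff_subset)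
    have "even (card A')"
    proof (rule less.hyps)
      show "card A' < card A" using card by simp
      show "finite A'" using less.prems(1) unfolding A'_def by simp
      fix b assume "b \<in> A'"
      then have b: "b \<in> A" "b \<noteq> a" "b \<noteq> f a" unfolding A'_def by auto
      then have fb: "f b \<in> A" "f b \<noteq> b" "f (f b) = b" using less.prems(2) by blast+
      have "f b \<noteq> a" using b(3) fb(3) by auto
      moreover have "f b \<noteq> f a" using b(2) fb(3) less.prems(2)[OF a] by auto
      ultimately
      show "f b \<in> A' \<and> f b \<noteq> b \<and> f (f b) = b" using fb unfolding A'_def by simp
    qed
    then show ?thesis using card by simp
  qed simp
qed

locale triangle_configuration =
  fixes R :: "'a set" and meets :: "'a \<Rightarrow> 'a \<Rightarrow> bool"
  assumes finite_R: "finite R"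
    and meets_sym: "\<And>x y. meets x y \<Longrightarrow> meets y x"
    and third_exists: "\<And>x y. x \<in> R \<Longrightarrow> y \<in> R \<Longrightarrow> x \<noteq> y \<Longrightarrow> meets x y \<Longrightarrow>
      \<exists>z\<in>R. z \<noteq> x \<and> z \<noteq> y \<and> meets z x \<and> meets z y"
    and third_unique: "\<And>x y z z'. x \<in> R \<Longrightarrow> y \<in> R \<Longrightarrow> x \<noteq> y \<Longrightarrow> meets x y \<Longrightarrow>
      z \<in> R \<Longrightarrow> z \<noteq> x \<Longrightarrow> z \<noteq> y \<Longrightarrow> meets z x \<Longrightarrow> meets z y \<Longrightarrow>
      z' \<in> R \<Longrightarrow> z' \<noteq> x \<Longrightarrow> z' \<noteq> y \<Longrightarrow> meets z' x \<Longrightarrow> meets z' y \<Longrightarrow> z = z'"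
    and third_covers: "\<And>x y z v. x \<in> R \<Longrightarrow> y \<in> R \<Longrightarrow> x \<noteq> y \<Longrightarrow> meets x y \<Longrightarrow>
      z \<in> R \<Longrightarrow> z \<noteq> x \<Longrightarrow> z \<noteq> y \<Longrightarrow> meets z x \<Longrightarrow> meets z y \<Longrightarrow>
      v \<in> R \<Longrightarrow> meets v x \<or> meets v y \<or> meets v z"
begin

definition third_of :: "'a \<Rightarrow> 'a \<Rightarrow> 'a" where
  "third_of x y = (THE z. z \<in> R \<and> z \<noteq> x \<and> z \<noteq> y \<and> meets z x \<and> meets z y)"

context
  fixes x y assumes x: "x \<in> R" and y: "y \<in> R" and xy: "x \<noteq> y" and meets_xy: "meets x y"
begin

lemma third_of:
  "third_of x y \<in> R" "third_of x y \<noteq> x" "third_of x y \<noteq> y"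
  "meets (third_of x y) x" "meets (third_of x y) y"
proof -
  let ?P = "\<lambda>z. z \<in> R \<and> z \<noteq> x \<and> z \<noteq> y \<and> meets z x \<and> meets z y"
  obtain z where z: "?P z"
    using third_exists[OF x y xy meets_xy] by blast
  have "\<exists>!z. ?P z"
  proof (rule ex1I[of _ z])
    show "?P z" by (rule z)
    fix z' assume "?P z'"
    then show "z' = z" using third_unique[OF x y xy meets_xy, of z' z] z by simp
  qed
  from theI'[OF this] show "third_of x y \<in> R" "third_of x y \<noteq> x" "third_of x y \<noteq> y"
    "meets (third_of x y) x" "meets (third_of x y) y"
    unfolding third_of_def by simp_all
qed

lemma third_of_unique:
  "v \<in> R \<Longrightarrow> v \<noteq> x \<Longrightarrow> v \<noteq> y \<Longrightarrow> meets v x \<Longrightarrow> meets v y \<Longrightarrow> v = third_of x y"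
  using third_unique[OF x y xy meets_xy _ _ _ _ _ third_of] .

lemma third_of_covers: "v \<in> R \<Longrightarrow> meets v x \<or> meets v y \<or> meets v (third_of x y)"
  using third_covers[OF x y xy meets_xy third_of] .

end

context
  fixes x y assumes x: "x \<in> R" and y: "y \<in> R" and xy: "x \<noteq> y" and meets_xy: "meets x y"
begin

lemmas third_of_xy = third_of[OF x y xy meets_xy]

lemma triangle_subset: "{x, y, third_of x y} \<subseteq> R" and card_triangle: "card {x, y, third_of x y} = 3"
  using x y xy third_of_xy by auto

lemma triangle_edge:
  "a \<in> {x, y, third_of x y} \<Longrightarrow> b \<in> {x, y, third_of x y} \<Longrightarrow> a \<noteq> b \<Longrightarrow> meets a b"
  using meets_xy third_of_xy(4,5) meets_sym[OF meets_xy] meets_sym[OF third_of_xy(4)]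
    meets_sym[OF third_of_xy(5)]
  by auto

lemma meets_two_vertices_in_triangle:
  assumes ab: "a \<in> {x, y, third_of x y}" "b \<in> {x, y, third_of x y}" "a \<noteq> b"
    and v: "v \<in> R" "v \<noteq> a" "v \<noteq> b" "meets v a" "meets v b"
  shows "v \<in> {x, y, third_of x y}"
proof -
  have "card ({x, y, third_of x y} - {a, b}) = 1"
    using ab card_triangle by (simp add: card_Diff_subset)
  then obtain t where "{x, y, third_of x y} - {a, b} = {t}" by (rule card_1_singletonE)
  then have t: "t \<in> {x, y, third_of x y}" "t \<noteq> a" "t \<noteq> b" by auto
  have R: "a \<in> R" "b \<in> R" "t \<in> R" using ab t(1) triangle_subset by auto
  have "t = third_of a b"
    by (rule third_of_unique[OF R(1,2) ab(3) triangle_edge[OF ab] R(3) t(2,3)])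
      (use triangle_edge[OF t(1) ab(1) t(2)] triangle_edge[OF t(1) ab(2) t(3)] in auto)
  moreover have "v = third_of a b"
    using third_of_unique[OF R(1,2) ab(3) triangle_edge[OF ab] v] .
  ultimately show ?thesis using t by simp
qed

text \<open>The elements outside the triangle that meet a vertex t are paired off by the involution
  v \<mapsto> third_of t v.\<close>
lemma even_card_outside_meeting_vertex:
  assumes t: "t \<in> {x, y, third_of x y}"
  shows "even (card {v \<in> R - {x, y, third_of x y}. meets v t})"
proof (rule even_card_if_fixpoint_free_involution)
  show "finite {v \<in> R - {x, y, third_of x y}. meets v t}" using finite_R by simp
next
  fix v assume "v \<in> {v \<in> R - {x, y, third_of x y}. meets v t}"
  then have v: "v \<in> R" "v \<notin> {x, y, third_of x y}" "meets v t" and tv: "t \<noteq> v" "meets t v"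
    using t meets_sym[of v t] by auto
  have tR: "t \<in> R" using t triangle_subset by auto
  note f = third_of[OF tR v(1) tv]
  have "third_of t (third_of t v) = v"
    using third_of_unique[OF tR f(1) f(2)[symmetric] meets_sym[OF f(4)] v(1) tv(1)[symmetric]]
      f(3)[symmetric] v(3) meets_sym[OF f(5)] by simp
  moreover have "third_of t v \<notin> {x, y, third_of x y}"
    using meets_two_vertices_in_triangle[OF t _ f(2)[symmetric] v(1) tv(1)[symmetric] f(3)[symmetric]
        v(3) meets_sym[OF f(5)]] v(2)
    by blast
  ultimately show "third_of t v \<in> {v \<in> R - {x, y, third_of x y}. meets v t} \<and> third_of t v \<noteq> v
      \<and> third_of t (third_of t v) = v"
    using f by auto
qed

end

text \<open>Every element outside the triangle meets exactly one of its vertices, so the complement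
  of the triangle splits into three sets of even cardinality.\<close>
theorem odd_card:
  assumes x: "x \<in> R" and y: "y \<in> R" and xy: "x \<noteq> y" and meets_xy: "meets x y"
  shows "odd (card R)"
proof -
  define z where "z = third_of x y"
  define T where "T = {x, y, z}"
  define S where "S t = {v \<in> R - T. meets v t}" for t
  note z = third_of[OF x y xy meets_xy, folded z_def]
  note T = triangle_subset[OF x y xy meets_xy, folded z_def T_def]
    card_triangle[OF x y xy meets_xy, folded z_def T_def]
  have "R - T = S x \<union> S y \<union> S z"
    using third_of_covers[OF x y xy meets_xy] unfolding S_def z_def[symmetric] by blast
  moreover have "S a \<inter> S b = {}" if ab: "a \<in> T" "b \<in> T" "a \<noteq> b" for a b
  proof -
    have "v \<in> T" if "v \<in> S a" "v \<in> S b" for v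
    proof -
      have v: "v \<in> R" "v \<notin> T" "meets v a" "meets v b" using that unfolding S_def by auto
      then have "v \<noteq> a" "v \<noteq> b" using ab by auto
      with v ab show ?thesis
        using meets_two_vertices_in_triangle[OF x y xy meets_xy, of a b v] unfolding T_def z_def by blast
    qed
    then show ?thesis unfolding S_def by blast
  qed
  moreover have "finite (S t)" for t unfolding S_def using finite_R by simp
  moreover have "x \<in> T" "y \<in> T" "z \<in> T" unfolding T_def by auto
  ultimately have "card (R - T) = card (S x) + card (S y) + card (S z)"
    using xy z(2,3) by (simp add: card_Un_disjoint Int_Un_distrib2)
  moreover have "even (card (S t))" if "t \<in> T" for t
    using even_card_outside_meeting_vertex[OF x y xy meets_xy] that unfolding S_def T_def z_def by blast
  ultimately have "even (card (R - T))" using \<open>x \<in> T\<close> \<open>y \<in> T\<close> \<open>z \<in> T\<close> by simp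
  moreover have "card (R - T) = card R - 3" "3 \<le> card R"
    using finite_R T card_mono[OF finite_R T(1)] by (simp_all add: card_Diff_subset finite_subset)
  ultimately show ?thesis by presburger
qed

end

section \<open>The rational lines on the surface\<close>

lemma triangle_configuration_rat_lines:
  assumes smooth: "smooth_cubic c" and "finite (rat_lines_on c)"
  shows "triangle_configuration (rat_lines_on c) lines_meet"
proof
  show "finite (rat_lines_on c)" by (fact assms(2))
  show "lines_meet y x" if "lines_meet x y" for x y using that by (rule lines_meet_sym)
next
  fix L M assume "L \<in> rat_lines_on c" "M \<in> rat_lines_on c" "L \<noteq> M" "lines_meet L M"
  then obtain p u w where sec: "rat_plane_section c p u w"
    and L: "L = span2 (of_rat_vec p) (of_rat_vec u)" and M: "M = span2 (of_rat_vec p) (of_rat_vec w)"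
    using rat_plane_section_exists[OF smooth] by blast
  interpret rat_plane_section c p u w by (fact sec)
  show "\<exists>N\<in>rat_lines_on c. N \<noteq> L \<and> N \<noteq> M \<and> lines_meet N L \<and> lines_meet N M"
    using third_line_in_rat_lines third_line_ne_first third_line_ne_second
      third_line_meets_first third_line_meets_second L M by blast
  have unique: "N = third_line" if "N \<in> rat_lines_on c" "N \<noteq> L" "N \<noteq> M" "lines_meet N L" "lines_meet N M" for N
    using rat_line_meeting_both_eq_third_line that L M by blast
  show "N = N'" if "N \<in> rat_lines_on c" "N \<noteq> L" "N \<noteq> M" "lines_meet N L" "lines_meet N M"
    "N' \<in> rat_lines_on c" "N' \<noteq> L" "N' \<noteq> M" "lines_meet N' L" "lines_meet N' M" for N N'
    using unique that by metis
  show "lines_meet K L \<or> lines_meet K M \<or> lines_meet K N"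
    if "N \<in> rat_lines_on c" "N \<noteq> L" "N \<noteq> M" "lines_meet N L" "lines_meet N M" "K \<in> rat_lines_on c" for N K
    using unique[OF that(1-5)] rat_line_meets_plane_section[OF that(6)] L M by simp
qed

theorem corollary4p13:
  fixes c :: "nat \<Rightarrow> nat \<Rightarrow> nat \<Rightarrow> rat"
  assumes "smooth_cubic c"
    and "\<not> (\<exists>L1 L2 L3. L1 \<in> rat_lines_on c \<and> L2 \<in> rat_lines_on c \<and> L3 \<in> rat_lines_on c \<and>
              lines_disjoint L1 L2 \<and> lines_disjoint L1 L3 \<and> lines_disjoint L2 L3)"
  shows "card (rat_lines_on c) \<noteq> 6"
proof
  assume six: "card (rat_lines_on c) = 6"
  then have "finite (rat_lines_on c)" by (intro card_ge_0_finite) simp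
  then interpret triangle_configuration "rat_lines_on c" lines_meet
    by (rule triangle_configuration_rat_lines[OF assms(1)])
  obtain B where "B \<subseteq> rat_lines_on c" "card B = 3"
    using obtain_subset_with_card_n[of 3 "rat_lines_on c"] six by auto
  then obtain L1 L2 L3 where L: "L1 \<in> rat_lines_on c" "L2 \<in> rat_lines_on c" "L3 \<in> rat_lines_on c"
    and "L1 \<noteq> L2" "L1 \<noteq> L3" "L2 \<noteq> L3"
    unfolding card_3_iff by auto
  moreover have "lines_meet L1 L2 \<or> lines_meet L1 L3 \<or> lines_meet L2 L3"
    using assms(2) L lines_disjoint_iff_not_meet unfolding rat_lines_on_def by blast
  ultimately have "odd (card (rat_lines_on c))" using odd_card by blast
  then show False using six by simp
qed

end
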